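(* For each $\mu\in[\mu_m,\mu_M]$, the map $x\mapsto V^N(x,N,\mu)$ is positive, increasing and convex on $(0,\infty)$. Moreover, there is $L>0$ independent of $\mu$ such that $|V^N(x,N,\mu)-V^N(y,N,\mu)|\le L|x-y|$ for all $x,y\in(0,\infty)$.
   Context: Let $(B_t)_{t\ge0}$ be a standard Brownian motion, $\mathbb F^B$ its augmented filtration and $\mathcal T(\mathbb F^B)$ the set of $\mathbb F^B$-stopping times with values in $[0,\infty]$ (terms discounted at $\tau$ are $0$ on $\{\tau=\infty\}$). Fix $\theta>0$, $\alpha\ge0$, $\sigma>0$, $\rho>0$, $\nu\in[0,1]$, $K\in\mathbb R$, $\hat\rho>0$, $0<\mu_m\le\mu_M<\infty$, $\hat\mu\in[\mu_m,\mu_M]$, and assume $\theta-\alpha-\rho-\mu_m<0$. For $x>0$, $X_t=x\exp((\theta-\alpha-\sigma^2/2)t+\sigma B_t)$ solves $dX_t=(\theta-\alpha)X_tdt+\sigma X_tdB_t$, $X_0=x$, and $\mathsf E_x$ is the corresponding expectation. For $\mu\in[\mu_m,\mu_M]$ let $\hat f(N,\mu):=(\hat\rho+\hat\mu)/(\rho+\mu)$ and $$V^N(x,N,\mu):=\sup_{\tau\in\mathcal T(\mathbb F^B)}\mathsf E_x\Big[\int_0^\tau e^{-(\rho+\mu)t}(\alpha+\nu\mu)X_tdt+e^{-(\rho+\mu)\tau}\hat f(N,\mu)(X_\tau-K)\Big].$$ *)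

theory Defs
  imports "HOL-Probability.Probability"
begin

definition std_BM :: "'a measure \<Rightarrow> (real \<Rightarrow> 'a \<Rightarrow> real) \<Rightarrow> bool" where
  "std_BM M B \<longleftrightarrow> prob_space M \<and>
     (\<forall>t. B t \<in> borel_measurable M) \<and>
     (\<forall>\<omega>\<in>space M. B 0 \<omega> = 0 \<and> continuous_on {0..} (\<lambda>t. B t \<omega>)) \<and>
     (\<forall>s t. 0 \<le> s \<and> s < t \<longrightarrow>
        distributed M lborel (\<lambda>\<omega>. B t \<omega> - B s \<omega>) (normal_density 0 (sqrt (t - s)))) \<and>
     (\<forall>(ts :: nat \<Rightarrow> real) n. 0 \<le> ts 0 \<and> (\<forall>i<n. ts i < ts (Suc i)) \<longrightarrow>
        prob_space.indep_vars M (\<lambda>_. borel) (\<lambda>i \<omega>. B (ts (Suc i)) \<omega> - B (ts i) \<omega>) {..<n})"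

definition nat_filt :: "'a measure \<Rightarrow> (real \<Rightarrow> 'a \<Rightarrow> real) \<Rightarrow> real \<Rightarrow> 'a set set" where
  "nat_filt M B t = (\<Union>s\<in>{0..t}. {B s -` A \<inter> space M | A. A \<in> sets borel})"

definition null_subsets :: "'a measure \<Rightarrow> 'a set set" where
  "null_subsets M = {N. \<exists>N'\<in>null_sets M. N \<subseteq> N'}"

definition aug_filt :: "'a measure \<Rightarrow> (real \<Rightarrow> 'a \<Rightarrow> real) \<Rightarrow> real \<Rightarrow> 'a measure" where
  "aug_filt M B t = sigma (space M) (nat_filt M B t \<union> null_subsets M)"

definition BM_stopping_time :: "'a measure \<Rightarrow> (real \<Rightarrow> 'a \<Rightarrow> real) \<Rightarrow> ('a \<Rightarrow> ennreal) \<Rightarrow> bool" where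
  "BM_stopping_time M B \<tau> \<longleftrightarrow>
     (\<forall>t\<ge>0. {\<omega>\<in>space M. \<tau> \<omega> \<le> ennreal t} \<in> sets (aug_filt M B t))"

definition GBM :: "(real \<Rightarrow> 'a \<Rightarrow> real) \<Rightarrow> real \<Rightarrow> real \<Rightarrow> real \<Rightarrow> real \<Rightarrow> real \<Rightarrow> 'a \<Rightarrow> real" where
  "GBM B \<theta> \<alpha> \<sigma> x t \<omega> = x * exp ((\<theta> - \<alpha> - \<sigma>\<^sup>2 / 2) * t + \<sigma> * B t \<omega>)"

definition fhat :: "real \<Rightarrow> real \<Rightarrow> real \<Rightarrow> real \<Rightarrow> real" where
  "fhat \<rho> \<rho>h \<mu>h \<mu> = (\<rho>h + \<mu>h) / (\<rho> + \<mu>)"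

definition reward ::
  "(real \<Rightarrow> 'a \<Rightarrow> real) \<Rightarrow> real \<Rightarrow> real \<Rightarrow> real \<Rightarrow> real \<Rightarrow> real \<Rightarrow> real \<Rightarrow> real \<Rightarrow> real
     \<Rightarrow> real \<Rightarrow> real \<Rightarrow> ('a \<Rightarrow> ennreal) \<Rightarrow> 'a \<Rightarrow> real" where
  "reward B \<theta> \<alpha> \<sigma> \<rho> \<nu> K \<rho>h \<mu>h x \<mu> \<tau> \<omega> =
     (LINT t:{t. 0 \<le> t \<and> ennreal t < \<tau> \<omega>}|lborel.
         exp (-(\<rho> + \<mu>) * t) * (\<alpha> + \<nu> * \<mu>) * GBM B \<theta> \<alpha> \<sigma> x t \<omega>)
     + (if \<tau> \<omega> = \<infinity> then 0
        else exp (-(\<rho> + \<mu>) * enn2real (\<tau> \<omega>)) * fhat \<rho> \<rho>h \<mu>h \<mu>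
               * (GBM B \<theta> \<alpha> \<sigma> x (enn2real (\<tau> \<omega>)) \<omega> - K))"

text \<open>Value function V^N(x,N,\<mu>) (expectation taken on the completion of M, on which
  all augmented-filtration events are measurable).\<close>
definition VN ::
  "'a measure \<Rightarrow> (real \<Rightarrow> 'a \<Rightarrow> real) \<Rightarrow> real \<Rightarrow> real \<Rightarrow> real \<Rightarrow> real \<Rightarrow> real \<Rightarrow> real \<Rightarrow> real
     \<Rightarrow> real \<Rightarrow> real \<Rightarrow> real \<Rightarrow> real" where
  "VN M B \<theta> \<alpha> \<sigma> \<rho> \<nu> K \<rho>h \<mu>h x \<mu> =
     (SUP \<tau>\<in>{\<tau>. BM_stopping_time M B \<tau>}.
        integral\<^sup>L (completion M) (reward B \<theta> \<alpha> \<sigma> \<rho> \<nu> K \<rho>h \<mu>h x \<mu> \<tau>))"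

end

theory Submission
  imports Defs
begin

text \<open>
  For a fixed stopping time \<tau> the expected reward is affine in the initial value x: its slope
  is the expected reward of the process started at 1 with K = 0, which is nonnegative, and its
  intercept is bounded by fhat |K|. Hence x \<mapsto> V^N(x, N, \<mu>) is a supremum of affine functions
  with slopes in [0, A], so it is increasing, convex and A-Lipschitz; stopping at time 1 exactly
  when X_1 > |K| + 1 shows that it is positive.

  The substance is a bound A on the slopes that is uniform in \<tau> and \<mu>. The discount rate
  exceeds the growth rate of X by \<kappa> = \<rho> + \<mu>_m - (\<theta> - \<alpha>) > 0, so every slope is bounded by a
  constant times E [\<Sum>_n sup_{n \<le> t \<le> n+1} exp (\<sigma> B_t - (\<kappa> + \<sigma>^2/2) t)]. On the block [n, n+1]
  Young's inequality with conjugate exponents p, q splits the exponent into p (\<sigma> B_n - \<dots>) and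
  q \<sigma> sup_{s \<le> 1} |B_{n+s} - B_n|. The first part has exponentially small expectation by the
  Gaussian moment generating function. The second is controlled by dyadic chaining: the
  oscillation of B at level j is a maximum of 2^j Gaussian increments of variance 2^-j, and
  the weights (3/4)^j of a convexity argument make the series of exponential moments converge.
\<close>

lemma exp_add_le_conjugate:
  fixes a b p q :: real
  assumes "0 < p" "0 < q" "1 / p + 1 / q = 1"
  shows "exp (a + b) \<le> exp (p * a) + exp (q * b)"
proof -
  let ?m = "max (p * a) (q * b)"
  have "a + b = (1 / p) * (p * a) + (1 / q) * (q * b)"
    using assms by simp
  also have "\<dots> \<le> (1 / p) * ?m + (1 / q) * ?m"
    using assms by (intro add_mono mult_left_mono) auto
  also have "\<dots> = ?m"
    using assms(3) by (metis distrib_right mult_1)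
  finally have "exp (a + b) \<le> exp ?m"
    by simp
  also have "\<dots> \<le> exp (p * a) + exp (q * b)"
    by (simp add: max_def add_increasing add_increasing2)
  finally show ?thesis .
qed

lemma exp_divide_le_one_plus_exp:
  fixes y r :: real
  assumes "1 \<le> r"
  shows "exp (y / r) \<le> 1 + exp y"
proof (cases "y \<le> 0")
  case True
  then have "exp (y / r) \<le> 1"
    using assms by (simp add: divide_nonpos_pos)
  then show ?thesis
    by (smt (verit) exp_gt_zero)
next
  case False
  then have "y / r \<le> y"
    using assms by (simp add: divide_le_eq mult_le_cancel_left1)
  then show ?thesis
    by (smt (verit) exp_le_cancel_iff)
qed

lemma conjugate_exponents_ratio:
  fixes s k :: real
  assumes "0 < s" "0 < k"
  shows "1 / (1 + k / s) + 1 / (1 + s / k) = 1"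
proof -
  have "1 / (1 + k / s) = s / (s + k)" "1 / (1 + s / k) = k / (s + k)"
    using assms by (simp_all add: field_simps)
  then show ?thesis
    using assms by (simp add: add_divide_distrib[symmetric])
qed

lemma exp_mult_abs_le: "exp (a * \<bar>d\<bar>) \<le> exp (a * d) + exp (- (a * d))"
  for a d :: real
  by (cases "0 \<le> d") (simp_all add: add_increasing add_increasing2)

lemma exp_Max_le_sum:
  fixes f :: "'i \<Rightarrow> real"
  assumes "0 \<le> c" "finite K" "K \<noteq> {}"
  shows "exp (c * Max (f ` K)) \<le> (\<Sum>k\<in>K. exp (c * f k))"
proof -
  have "Max (f ` K) \<in> f ` K"
    using assms by (intro Max_in) auto
  then obtain k where "k \<in> K" "Max (f ` K) = f k"
    by auto
  then show ?thesis
    using assms(2) by (auto intro: member_le_sum)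
qed

lemma exp_sum_le_one_plus_sum_exp:
  fixes v y :: "'i \<Rightarrow> real"
  assumes "finite S" "\<And>j. j \<in> S \<Longrightarrow> 0 \<le> v j" "sum v S \<le> 1"
  shows "exp (\<Sum>j\<in>S. v j * y j) \<le> 1 + (\<Sum>j\<in>S. v j * exp (y j))"
proof -
  \<comment> \<open>Jensen's inequality, with the missing weight placed on an extra point with value 0\<close>
  define w where "w = (\<lambda>i. case i of None \<Rightarrow> 1 - sum v S | Some j \<Rightarrow> v j)"
  define z where "z = (\<lambda>i. case i of None \<Rightarrow> 0 | Some j \<Rightarrow> y j)"
  let ?S = "insert None (Some ` S)"
  have sum_S: "(\<Sum>i\<in>?S. f i) = f None + (\<Sum>j\<in>S. f (Some j))" for f :: "'i option \<Rightarrow> real"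
    using assms(1) by (simp add: sum.reindex)
  have "exp (\<Sum>i\<in>?S. w i *\<^sub>R z i) \<le> (\<Sum>i\<in>?S. w i * exp (z i))"
    by (rule convex_on_sum[OF _ _ exp_convex]) (use assms in \<open>auto simp: sum_S w_def\<close>)
  then have "exp (\<Sum>j\<in>S. v j * y j) \<le> (1 - sum v S) + (\<Sum>j\<in>S. v j * exp (y j))"
    by (simp add: sum_S w_def z_def)
  also have "\<dots> \<le> 1 + (\<Sum>j\<in>S. v j * exp (y j))"
    using assms(2) by (simp add: sum_nonneg)
  finally show ?thesis .
qed

lemma real_Suc_le_geometric: "real j + 1 \<le> 8 * (9 / 8 :: real) ^ j"
proof (induction j)
  case (Suc j)
  have "1 \<le> (9 / 8 :: real) ^ j"
    by (simp add: one_le_power)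
  with Suc show ?case
    by (simp; linarith)
qed simp

context
  fixes a b :: "'i \<Rightarrow> real" and I :: "'i set" and A C :: real
  assumes nonempty: "I \<noteq> {}"
    and slope_bounds: "\<And>i. i \<in> I \<Longrightarrow> 0 \<le> a i \<and> a i \<le> A"
    and intercept_bound: "\<And>i. i \<in> I \<Longrightarrow> b i \<le> C"
begin

lemma bdd_above_affine_family: "bdd_above ((\<lambda>i. a i * x + b i) ` I)"
proof (rule bdd_aboveI2)
  fix i
  assume "i \<in> I"
  then have "a i * x \<le> A * \<bar>x\<bar>"
    using slope_bounds[of i] by (metis abs_ge_self mult_left_mono mult_right_mono abs_ge_zero order_trans)
  then show "a i * x + b i \<le> A * \<bar>x\<bar> + C"
    using intercept_bound[OF \<open>i \<in> I\<close>] by simp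
qed

lemma mono_SUP_affine: "mono (\<lambda>x. SUP i\<in>I. a i * x + b i)"
proof (rule monoI, rule cSUP_mono[OF nonempty bdd_above_affine_family])
  fix x y :: real and i
  assume "x \<le> y" "i \<in> I"
  then show "\<exists>j\<in>I. a i * x + b i \<le> a j * y + b j"
    using slope_bounds[of i] by (intro bexI[of _ i]) (simp_all add: mult_left_mono)
qed

lemma convex_on_SUP_affine: "convex_on UNIV (\<lambda>x. SUP i\<in>I. a i * x + b i)"
proof (rule convex_onI)
  fix t x y :: real
  assume "0 < t" "t < 1"
  show "(SUP i\<in>I. a i * ((1 - t) *\<^sub>R x + t *\<^sub>R y) + b i)
      \<le> (1 - t) * (SUP i\<in>I. a i * x + b i) + t * (SUP i\<in>I. a i * y + b i)"
  proof (rule cSUP_least[OF nonempty])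
    fix i
    assume "i \<in> I"
    have "a i * ((1 - t) *\<^sub>R x + t *\<^sub>R y) + b i = (1 - t) * (a i * x + b i) + t * (a i * y + b i)"
      by (simp add: algebra_simps)
    also have "\<dots> \<le> (1 - t) * (SUP i\<in>I. a i * x + b i) + t * (SUP i\<in>I. a i * y + b i)"
      using \<open>0 < t\<close> \<open>t < 1\<close> \<open>i \<in> I\<close>
      by (intro add_mono mult_left_mono cSUP_upper bdd_above_affine_family) auto
    finally show "a i * ((1 - t) *\<^sub>R x + t *\<^sub>R y) + b i
        \<le> (1 - t) * (SUP i\<in>I. a i * x + b i) + t * (SUP i\<in>I. a i * y + b i)" .
  qed
qed simp

lemma abs_SUP_affine_diff_le:
  "\<bar>(SUP i\<in>I. a i * x + b i) - (SUP i\<in>I. a i * y + b i)\<bar> \<le> A * \<bar>x - y\<bar>"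
proof -
  have one_sided: "(SUP i\<in>I. a i * x + b i) \<le> (SUP i\<in>I. a i * y + b i) + A * \<bar>x - y\<bar>" for x y
  proof (rule cSUP_least[OF nonempty])
    fix i
    assume "i \<in> I"
    have "a i * x \<le> a i * y + a i * \<bar>x - y\<bar>"
      using slope_bounds[OF \<open>i \<in> I\<close>] by (simp add: distrib_left[symmetric] mult_left_mono)
    also have "a i * \<bar>x - y\<bar> \<le> A * \<bar>x - y\<bar>"
      using slope_bounds[OF \<open>i \<in> I\<close>] by (simp add: mult_right_mono)
    finally have "a i * x + b i \<le> a i * y + b i + A * \<bar>x - y\<bar>"
      by simp
    also have "\<dots> \<le> (SUP i\<in>I. a i * y + b i) + A * \<bar>x - y\<bar>"
      using cSUP_upper[OF \<open>i \<in> I\<close> bdd_above_affine_family] by simp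
    finally show "a i * x + b i \<le> (SUP i\<in>I. a i * y + b i) + A * \<bar>x - y\<bar>" .
  qed
  show ?thesis
    using one_sided[of x y] one_sided[of y x] by (simp add: abs_minus_commute abs_le_iff)
qed

end

section \<open>Dyadic chaining\<close>

definition dyadic_floor :: "nat \<Rightarrow> real \<Rightarrow> real" where
  "dyadic_floor J t = of_int \<lfloor>2 ^ J * t\<rfloor> / 2 ^ J"

lemma dyadic_floor_nonneg: "0 \<le> t \<Longrightarrow> 0 \<le> dyadic_floor J t"
  unfolding dyadic_floor_def by simp

lemma dyadic_floor_le: "dyadic_floor J t \<le> t"
proof -
  have "of_int \<lfloor>2 ^ J * t\<rfloor> \<le> 2 ^ J * t"
    by linarith
  then show ?thesis
    unfolding dyadic_floor_def by (simp add: divide_le_eq mult.commute)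
qed

lemma less_dyadic_floor_add: "t < dyadic_floor J t + 1 / 2 ^ J"
proof -
  have "2 ^ J * t < of_int \<lfloor>2 ^ J * t\<rfloor> + 1"
    by linarith
  then show ?thesis
    unfolding dyadic_floor_def by (simp add: field_simps)
qed

lemma dyadic_floor_tendsto: "(\<lambda>J. dyadic_floor J t) \<longlonglongrightarrow> t"
proof (rule real_tendsto_sandwich)
  have "(\<lambda>J. t - 1 / 2 ^ J) \<longlonglongrightarrow> t - 0"
    by (intro tendsto_intros LIMSEQ_divide_realpow_zero) auto
  then show "(\<lambda>J. t - 1 / 2 ^ J) \<longlonglongrightarrow> t"
    by simp
  show "\<forall>\<^sub>F J in sequentially. t - 1 / 2 ^ J \<le> dyadic_floor J t"
    using less_dyadic_floor_add by (intro always_eventually) (smt (verit))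
qed (use dyadic_floor_le in auto)

definition dyadic_osc :: "(real \<Rightarrow> real) \<Rightarrow> nat \<Rightarrow> real" where
  "dyadic_osc b j = Max ((\<lambda>k. \<bar>b (real (Suc k) / 2 ^ j) - b (real k / 2 ^ j)\<bar>) ` {..<2 ^ j})"

lemma abs_dyadic_increment_le_osc:
  "k < 2 ^ j \<Longrightarrow> \<bar>b (real (Suc k) / 2 ^ j) - b (real k / 2 ^ j)\<bar> \<le> dyadic_osc b j"
  unfolding dyadic_osc_def by (intro Max_ge) auto

lemma dyadic_osc_nonneg: "0 \<le> dyadic_osc b j"
  using abs_dyadic_increment_le_osc[of 0 j b] by (meson abs_ge_zero order_trans zero_less_power zero_less_numeral)

lemma abs_dyadic_floor_Suc_diff_le:
  assumes "0 \<le> t" "t \<le> 1"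
  shows "\<bar>b (dyadic_floor (Suc J) t) - b (dyadic_floor J t)\<bar> \<le> dyadic_osc b (Suc J)"
proof -
  define m where "m = \<lfloor>2 ^ Suc J * t\<rfloor>"
  have "\<lfloor>2 ^ J * t\<rfloor> = m div 2"
    using floor_divide_real_eq_div[of 2 "2 ^ Suc J * t"] by (simp add: m_def)
  then have floor_J: "dyadic_floor J t = of_int (2 * (m div 2)) / 2 ^ Suc J"
    unfolding dyadic_floor_def by simp
  have floor_SucJ: "dyadic_floor (Suc J) t = of_int m / 2 ^ Suc J"
    unfolding dyadic_floor_def m_def ..
  consider "m = 2 * (m div 2)" | "m = 2 * (m div 2) + 1"
    by linarith
  then show ?thesis
  proof cases
    case 1
    then show ?thesis
      using floor_J floor_SucJ dyadic_osc_nonneg by simp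
  next
    case 2
    define k where "k = nat (2 * (m div 2))"
    have "0 \<le> m"
      using assms(1) by (simp add: m_def)
    then have k: "real k = of_int (2 * (m div 2))"
      unfolding k_def by simp
    then have Suc_k: "real (Suc k) = of_int m"
      by (subst 2) simp
    have "of_int m / 2 ^ Suc J \<le> (1 :: real)"
      using dyadic_floor_le[of "Suc J" t] assms(2) unfolding floor_SucJ by linarith
    then have "real (Suc k) \<le> 2 ^ Suc J"
      using Suc_k by (simp add: divide_le_eq)
    then have "k < 2 ^ Suc J"
      by (metis Suc_le_eq of_nat_le_iff of_nat_numeral of_nat_power)
    then show ?thesis
      using abs_dyadic_increment_le_osc[of k "Suc J" b] floor_J floor_SucJ k Suc_k
      by (simp add: abs_minus_commute)
  qed
qed

lemma abs_dyadic_floor_diff_le_sum_osc: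
  assumes "0 \<le> t" "t \<le> 1"
  shows "\<bar>b (dyadic_floor J t) - b 0\<bar> \<le> (\<Sum>j\<le>J. dyadic_osc b j)"
proof (induction J)
  case 0
  have "dyadic_floor 0 t = 0 \<or> dyadic_floor 0 t = 1"
    using assms unfolding dyadic_floor_def by (cases "t = 1") (auto simp: floor_eq_iff)
  then show ?case
    using abs_dyadic_increment_le_osc[of 0 0 b] dyadic_osc_nonneg[of b 0] by auto
next
  case (Suc J)
  then show ?case
    using abs_dyadic_floor_Suc_diff_le[OF assms, of b J] by simp
qed

definition chain_weight :: "nat \<Rightarrow> real" where
  "chain_weight j = (3 / 4) ^ j / 4"

lemma chain_weight_pos: "0 < chain_weight j"
  unfolding chain_weight_def by simp

lemma chain_weight_neq_0 [simp]: "chain_weight j \<noteq> 0"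
  using chain_weight_pos[of j] by simp

lemma chain_weight_sums: "chain_weight sums 1"
proof -
  have "(\<lambda>j. (3 / 4 :: real) ^ j) sums (1 / (1 - 3 / 4))"
    by (rule geometric_sums) simp
  from sums_divide[OF this, of 4] show ?thesis
    unfolding chain_weight_def by simp
qed

lemma sum_chain_weight_le: "(\<Sum>j\<le>J. chain_weight j) \<le> 1"
  using sum_le_suminf[OF sums_summable[OF chain_weight_sums], of "{..J}"] chain_weight_pos
    sums_unique[OF chain_weight_sums] by (simp add: less_imp_le)

lemma chain_weight_exponent_le:
  fixes \<beta> :: real and j :: nat
  defines "r \<equiv> (9 / 8 :: real) ^ j"
  shows "(real (Suc j) * ln 2 + (r * (\<beta> / chain_weight j))\<^sup>2 / 2 ^ Suc j) / r \<le> 8 * ln 2 + 8 * \<beta>\<^sup>2"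
proof -
  have "1 \<le> r"
    unfolding r_def by (simp add: one_le_power)
  have "real (Suc j) \<le> 8 * r"
    using real_Suc_le_geometric[of j] by (simp add: r_def)
  then have "real (Suc j) * ln 2 / r \<le> 8 * ln 2"
    using \<open>1 \<le> r\<close> by (simp add: divide_le_eq mult_right_mono)
  moreover have "(r * (\<beta> / chain_weight j))\<^sup>2 / 2 ^ Suc j / r = 8 * \<beta>\<^sup>2"
  proof -
    define q :: real where "q = (3 / 4) ^ j"
    have "0 < q"
      by (simp add: q_def)
    have r_eq: "q\<^sup>2 * 2 ^ j = r"
      unfolding q_def r_def power2_eq_square power_mult_distrib[symmetric] by simp
    have w_eq: "chain_weight j = q / 4"
      by (simp add: chain_weight_def q_def)
    show ?thesis
      unfolding w_eq r_eq[symmetric] using \<open>0 < q\<close> by (simp add: field_simps power2_eq_square)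
  qed
  ultimately show ?thesis
    by (simp add: add_divide_distrib)
qed

definition chaining_bound :: "real \<Rightarrow> (real \<Rightarrow> real) \<Rightarrow> ennreal" where
  "chaining_bound \<beta> b =
     1 + (\<Sum>j. ennreal (chain_weight j * exp (\<beta> * dyadic_osc b j / chain_weight j)))"

lemma exp_abs_diff_le_chaining_bound:
  assumes b: "continuous_on {0..1} b" and "0 \<le> \<beta>" and t: "0 \<le> t" "t \<le> 1"
  shows "ennreal (exp (\<beta> * \<bar>b t - b 0\<bar>)) \<le> chaining_bound \<beta> b"
proof (rule LIMSEQ_le_const2)
  have "(\<lambda>J. b (dyadic_floor J t)) \<longlonglongrightarrow> b t"
  proof (rule continuous_on_tendsto_compose[OF b dyadic_floor_tendsto])
    show "\<forall>\<^sub>F J in sequentially. dyadic_floor J t \<in> {0..1}"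
      using t dyadic_floor_nonneg[OF t(1)]
      by (intro always_eventually allI) (auto intro: order_trans[OF dyadic_floor_le])
  qed (use t in auto)
  then show "(\<lambda>J. ennreal (exp (\<beta> * \<bar>b (dyadic_floor J t) - b 0\<bar>)))
      \<longlonglongrightarrow> ennreal (exp (\<beta> * \<bar>b t - b 0\<bar>))"
    by (intro tendsto_intros)
  let ?w = chain_weight
  show "\<exists>N. \<forall>J\<ge>N. ennreal (exp (\<beta> * \<bar>b (dyadic_floor J t) - b 0\<bar>)) \<le> chaining_bound \<beta> b"
  proof (intro exI allI impI)
    fix J
    have "exp (\<beta> * \<bar>b (dyadic_floor J t) - b 0\<bar>) \<le> exp (\<Sum>j\<le>J. ?w j * (\<beta> * dyadic_osc b j / ?w j))"
      using abs_dyadic_floor_diff_le_sum_osc[OF t, of b J] \<open>0 \<le> \<beta>\<close>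
      by (simp add: mult_left_mono sum_distrib_left[symmetric])
    also have "\<dots> \<le> 1 + (\<Sum>j\<le>J. ?w j * exp (\<beta> * dyadic_osc b j / ?w j))"
      using chain_weight_pos sum_chain_weight_le
      by (intro exp_sum_le_one_plus_sum_exp) (auto simp: less_imp_le)
    finally have "ennreal (exp (\<beta> * \<bar>b (dyadic_floor J t) - b 0\<bar>))
        \<le> ennreal (1 + (\<Sum>j\<le>J. ?w j * exp (\<beta> * dyadic_osc b j / ?w j)))"
      by (rule ennreal_leI)
    also have "\<dots> = 1 + (\<Sum>j\<le>J. ennreal (?w j * exp (\<beta> * dyadic_osc b j / ?w j)))"
      using chain_weight_pos by (simp add: sum_nonneg sum_ennreal less_imp_le)
    also have "\<dots> \<le> chaining_bound \<beta> b"
      unfolding chaining_bound_def by (intro add_left_mono sum_le_suminf) auto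
    finally show "ennreal (exp (\<beta> * \<bar>b (dyadic_floor J t) - b 0\<bar>)) \<le> chaining_bound \<beta> b" .
  qed
qed

section \<open>Brownian motion\<close>

lemma nn_integral_normal_density_exp:
  fixes s a :: real
  assumes "0 < s"
  shows "(\<integral>\<^sup>+z. ennreal (normal_density 0 s z) * ennreal (exp (a * z)) \<partial>lborel)
    = ennreal (exp (a\<^sup>2 * s\<^sup>2 / 2))"
proof -
  \<comment> \<open>completing the square\<close>
  have shift: "normal_density 0 s z * exp (a * z) = exp (a\<^sup>2 * s\<^sup>2 / 2) * normal_density (a * s\<^sup>2) s z"
    for z
  proof -
    have "- (z - 0)\<^sup>2 / (2 * s\<^sup>2) + a * z = a\<^sup>2 * s\<^sup>2 / 2 + - (z - a * s\<^sup>2)\<^sup>2 / (2 * s\<^sup>2)"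
      using assms by (simp add: field_simps power2_eq_square)
    then show ?thesis
      unfolding normal_density_def by (simp add: exp_add[symmetric] ac_simps)
  qed
  have "(\<integral>\<^sup>+z. ennreal (normal_density 0 s z) * ennreal (exp (a * z)) \<partial>lborel)
      = ennreal (exp (a\<^sup>2 * s\<^sup>2 / 2)) * (\<integral>\<^sup>+z. ennreal (normal_density (a * s\<^sup>2) s z) \<partial>lborel)"
    by (subst nn_integral_cmult[symmetric]) (simp_all add: ennreal_mult'[symmetric] shift)
  also have "(\<integral>\<^sup>+z. ennreal (normal_density (a * s\<^sup>2) s z) \<partial>lborel) = 1"
    using integrable_normal_density[OF assms] integral_normal_density[OF assms]
    by (subst nn_integral_eq_integral) auto
  finally show ?thesis
    by simp
qed

locale brownian_motion =
  fixes M :: "'a measure" and B :: "real \<Rightarrow> 'a \<Rightarrow> real"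
  assumes std_BM: "std_BM M B"
begin

sublocale prob_space M
  using std_BM unfolding std_BM_def by blast

lemma B_measurable[measurable]: "B t \<in> borel_measurable M"
  using std_BM unfolding std_BM_def by blast

lemma B_zero: "\<omega> \<in> space M \<Longrightarrow> B 0 \<omega> = 0"
  using std_BM unfolding std_BM_def by blast

lemma B_continuous: "\<omega> \<in> space M \<Longrightarrow> continuous_on {0..} (\<lambda>t. B t \<omega>)"
  using std_BM unfolding std_BM_def by blast

lemma increment_distributed:
  "0 \<le> s \<Longrightarrow> s < t \<Longrightarrow>
    distributed M lborel (\<lambda>\<omega>. B t \<omega> - B s \<omega>) (\<lambda>z. ennreal (normal_density 0 (sqrt (t - s)) z))"
  using std_BM unfolding std_BM_def by blast

lemma nn_integral_exp_increment:
  assumes "0 \<le> s" "s \<le> t"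
  shows "(\<integral>\<^sup>+\<omega>. exp (a * (B t \<omega> - B s \<omega>)) \<partial>M) = ennreal (exp (a\<^sup>2 * (t - s) / 2))"
proof (cases "s = t")
  case False
  with assms have "s < t"
    by simp
  have "(\<integral>\<^sup>+\<omega>. exp (a * (B t \<omega> - B s \<omega>)) \<partial>M)
      = (\<integral>\<^sup>+z. ennreal (normal_density 0 (sqrt (t - s)) z) * ennreal (exp (a * z)) \<partial>lborel)"
    by (rule distributed_nn_integral[OF increment_distributed[OF assms(1) \<open>s < t\<close>], symmetric]) simp
  also have "\<dots> = ennreal (exp (a\<^sup>2 * (sqrt (t - s))\<^sup>2 / 2))"
    using \<open>s < t\<close> by (intro nn_integral_normal_density_exp) simp
  finally show ?thesis
    using assms by simp
qed (simp add: emeasure_space_1)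

lemma nn_integral_exp_abs_increment_le:
  assumes "0 \<le> s" "s \<le> t"
  shows "(\<integral>\<^sup>+\<omega>. exp (a * \<bar>B t \<omega> - B s \<omega>\<bar>) \<partial>M) \<le> 2 * ennreal (exp (a\<^sup>2 * (t - s) / 2))"
proof -
  have "(\<integral>\<^sup>+\<omega>. exp (a * \<bar>B t \<omega> - B s \<omega>\<bar>) \<partial>M)
      \<le> (\<integral>\<^sup>+\<omega>. ennreal (exp (a * (B t \<omega> - B s \<omega>))) + ennreal (exp (- a * (B t \<omega> - B s \<omega>))) \<partial>M)"
    by (intro nn_integral_mono)
      (simp add: exp_mult_abs_le ennreal_plus[symmetric] del: ennreal_plus)
  also have "\<dots> = 2 * ennreal (exp (a\<^sup>2 * (t - s) / 2))"
    using nn_integral_exp_increment[OF assms, of a] nn_integral_exp_increment[OF assms, of "- a"]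
    by (simp add: nn_integral_add mult_2)
  finally show ?thesis .
qed

lemma emeasure_B1_greater_pos: "0 < emeasure M {\<omega> \<in> space M. z < B 1 \<omega>}"
proof -
  let ?f = "\<lambda>x. ennreal (normal_density 0 1 x) * indicator {z<..} x"
  have "{\<omega> \<in> space M. z < B 1 \<omega>} = (\<lambda>\<omega>. B 1 \<omega> - B 0 \<omega>) -` {z<..} \<inter> space M"
    using B_zero by auto
  then have "emeasure M {\<omega> \<in> space M. z < B 1 \<omega>} = (\<integral>\<^sup>+x. ?f x \<partial>lborel)"
    using distributed_emeasure[OF increment_distributed[of 0 1], of "{z<..}"] by simp
  moreover have "(\<integral>\<^sup>+x. ?f x \<partial>lborel) \<noteq> 0"
  proof
    assume "(\<integral>\<^sup>+x. ?f x \<partial>lborel) = 0"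
    then have "emeasure lborel {x \<in> space lborel. ?f x \<noteq> 0} = 0"
      by (subst (asm) nn_integral_0_iff) auto
    moreover have "?f x \<noteq> 0 \<longleftrightarrow> x \<in> {z<..}" for x
      using normal_density_pos[of 1 0 x] by (simp split: split_indicator)
    ultimately have "emeasure lborel {z<..} = 0"
      by (simp add: greaterThan_def)
    moreover have "emeasure lborel {z<..<z + 1} \<le> emeasure lborel {z<..}"
      by (intro emeasure_mono) auto
    ultimately show False
      by simp
  qed
  ultimately show ?thesis
    by (simp add: zero_less_iff_neq_zero)
qed

end

section \<open>An integrable majorant for exponential Brownian motion with drift\<close>

text \<open>A weak form of E e^Y \<le> (E e^(rY))^(1/r) that avoids integrability conditions.\<close>
lemma (in prob_space) nn_integral_exp_le_of_scaled_exp: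
  assumes [measurable]: "Y \<in> borel_measurable M"
    and "1 \<le> r" and moment: "(\<integral>\<^sup>+\<omega>. exp (r * Y \<omega>) \<partial>M) \<le> ennreal (exp L)"
  shows "(\<integral>\<^sup>+\<omega>. exp (Y \<omega>) \<partial>M) \<le> ennreal (2 * exp (L / r))"
proof -
  have pointwise: "exp (Y \<omega>) \<le> exp (L / r) + exp (L / r - L) * exp (r * Y \<omega>)" for \<omega>
  proof -
    have "exp (Y \<omega>) = exp (L / r) * exp ((r * Y \<omega> - L) / r)"
      using \<open>1 \<le> r\<close> by (simp add: exp_add[symmetric] field_simps)
    also have "\<dots> \<le> exp (L / r) * (1 + exp (r * Y \<omega> - L))"
      using \<open>1 \<le> r\<close> by (intro mult_left_mono exp_divide_le_one_plus_exp) auto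
    also have "\<dots> = exp (L / r) + exp (L / r - L) * exp (r * Y \<omega>)"
      by (simp add: algebra_simps exp_diff)
    finally show ?thesis .
  qed
  have "(\<integral>\<^sup>+\<omega>. exp (Y \<omega>) \<partial>M)
      \<le> (\<integral>\<^sup>+\<omega>. ennreal (exp (L / r)) + ennreal (exp (L / r - L)) * ennreal (exp (r * Y \<omega>)) \<partial>M)"
    using pointwise by (intro nn_integral_mono) (simp add: ennreal_mult[symmetric] ennreal_plus[symmetric] del: ennreal_plus)
  also have "\<dots> = ennreal (exp (L / r)) + ennreal (exp (L / r - L)) * (\<integral>\<^sup>+\<omega>. exp (r * Y \<omega>) \<partial>M)"
    by (simp add: nn_integral_add nn_integral_cmult emeasure_space_1)
  also have "\<dots> \<le> ennreal (exp (L / r)) + ennreal (exp (L / r - L)) * ennreal (exp L)"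
    using moment by (intro add_left_mono mult_left_mono) auto
  also have "\<dots> = ennreal (2 * exp (L / r))"
    by (simp add: ennreal_mult[symmetric] ennreal_plus[symmetric] exp_diff del: ennreal_plus)
  finally show ?thesis .
qed

text \<open>The exponent p = 1 + \<kappa>/\<sigma>^2 makes the expectation of the first term equal to exp (-p\<kappa>n/4);
  q is its conjugate exponent.\<close>
definition BM_block_majorant :: "(real \<Rightarrow> 'a \<Rightarrow> real) \<Rightarrow> real \<Rightarrow> real \<Rightarrow> nat \<Rightarrow> 'a \<Rightarrow> ennreal" where
  "BM_block_majorant B \<sigma> \<kappa> n \<omega> =
     (let p = 1 + \<kappa> / \<sigma>\<^sup>2; q = 1 + \<sigma>\<^sup>2 / \<kappa> in
      ennreal (exp (p * (\<sigma> * B n \<omega> - (\<sigma>\<^sup>2 / 2 + 3 * \<kappa> / 4) * n)))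
      + ennreal (exp (- q * \<kappa> / 4 * n)) * chaining_bound (q * \<sigma>) (\<lambda>s. B (n + s) \<omega>))"

definition BM_majorant :: "(real \<Rightarrow> 'a \<Rightarrow> real) \<Rightarrow> real \<Rightarrow> real \<Rightarrow> 'a \<Rightarrow> ennreal" where
  "BM_majorant B \<sigma> \<kappa> \<omega> = (\<Sum>n. BM_block_majorant B \<sigma> \<kappa> n \<omega>)"

context brownian_motion
begin

lemma dyadic_osc_measurable [measurable]:
  "(\<lambda>\<omega>. dyadic_osc (\<lambda>s. B (n + s) \<omega>) j) \<in> borel_measurable M"
  unfolding dyadic_osc_def by measurable

lemma chaining_bound_measurable [measurable]:
  "(\<lambda>\<omega>. chaining_bound \<beta> (\<lambda>s. B (n + s) \<omega>)) \<in> borel_measurable M"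
  unfolding chaining_bound_def by measurable

lemma nn_integral_exp_dyadic_osc_le:
  assumes "0 \<le> n" "0 \<le> \<gamma>"
  shows "(\<integral>\<^sup>+\<omega>. exp (\<gamma> * dyadic_osc (\<lambda>s. B (n + s) \<omega>) j) \<partial>M)
    \<le> ennreal (exp (real (Suc j) * ln 2 + \<gamma>\<^sup>2 / 2 ^ Suc j))"
proof -
  define \<Delta> where "\<Delta> k \<omega> = \<bar>B (n + real (Suc k) / 2 ^ j) \<omega> - B (n + real k / 2 ^ j) \<omega>\<bar>" for k \<omega>
  have increment: "(\<integral>\<^sup>+\<omega>. exp (\<gamma> * \<Delta> k \<omega>) \<partial>M) \<le> 2 * ennreal (exp (\<gamma>\<^sup>2 / 2 ^ Suc j))" for k
  proof -
    have "n + real k / 2 ^ j \<le> n + real (Suc k) / 2 ^ j"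
      by (simp add: divide_right_mono)
    from nn_integral_exp_abs_increment_le[OF _ this, of \<gamma>] show ?thesis
      using \<open>0 \<le> n\<close> by (simp add: \<Delta>_def diff_divide_distrib[symmetric] mult.commute)
  qed
  have "(\<integral>\<^sup>+\<omega>. exp (\<gamma> * dyadic_osc (\<lambda>s. B (n + s) \<omega>) j) \<partial>M) \<le> (\<integral>\<^sup>+\<omega>. (\<Sum>k<2 ^ j. ennreal (exp (\<gamma> * \<Delta> k \<omega>))) \<partial>M)"
  proof (intro nn_integral_mono)
    fix \<omega>
    have "exp (\<gamma> * dyadic_osc (\<lambda>s. B (n + s) \<omega>) j) \<le> (\<Sum>k<2 ^ j. exp (\<gamma> * \<Delta> k \<omega>))"
      unfolding dyadic_osc_def \<Delta>_def using \<open>0 \<le> \<gamma>\<close>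
      by (intro exp_Max_le_sum[where f="\<lambda>k. \<bar>B (n + real (Suc k) / 2 ^ j) \<omega> - B (n + real k / 2 ^ j) \<omega>\<bar>", unfolded image_comp comp_def])
        (auto simp: lessThan_empty_iff)
    then show "ennreal (exp (\<gamma> * dyadic_osc (\<lambda>s. B (n + s) \<omega>) j)) \<le> (\<Sum>k<2 ^ j. ennreal (exp (\<gamma> * \<Delta> k \<omega>)))"
      by (simp add: ennreal_leI sum_ennreal)
  qed
  also have "\<dots> = (\<Sum>k<2 ^ j. \<integral>\<^sup>+\<omega>. exp (\<gamma> * \<Delta> k \<omega>) \<partial>M)"
    unfolding \<Delta>_def by (intro nn_integral_sum) measurable
  also have "\<dots> \<le> (\<Sum>k<(2 :: nat) ^ j. 2 * ennreal (exp (\<gamma>\<^sup>2 / 2 ^ Suc j)))"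
    by (intro sum_mono increment)
  also have "\<dots> = ennreal (2 ^ Suc j * exp (\<gamma>\<^sup>2 / 2 ^ Suc j))"
    by (simp add: ennreal_mult ennreal_power[symmetric] mult_ac)
  also have "2 ^ Suc j * exp (\<gamma>\<^sup>2 / 2 ^ Suc j) = exp (real (Suc j) * ln 2 + \<gamma>\<^sup>2 / 2 ^ Suc j)"
    by (subst exp_add, subst exp_of_nat_mult) simp
  finally show ?thesis .
qed

lemma nn_integral_exp_weighted_dyadic_osc_le:
  assumes "0 \<le> n" "0 \<le> \<beta>"
  shows "(\<integral>\<^sup>+\<omega>. exp (\<beta> * dyadic_osc (\<lambda>s. B (n + s) \<omega>) j / chain_weight j) \<partial>M)
    \<le> ennreal (512 * exp (8 * \<beta>\<^sup>2))"
proof -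
  \<comment> \<open>the scale r absorbs the factor 2^(j+1) of the union bound\<close>
  define r :: real where "r = (9 / 8) ^ j"
  define \<gamma> where "\<gamma> = \<beta> / chain_weight j"
  define L where "L = real (Suc j) * ln 2 + (r * \<gamma>)\<^sup>2 / 2 ^ Suc j"
  have "1 \<le> r"
    unfolding r_def by (simp add: one_le_power)
  have "0 \<le> \<gamma>"
    unfolding \<gamma>_def using \<open>0 \<le> \<beta>\<close> chain_weight_pos[of j] by simp
  have "(\<integral>\<^sup>+\<omega>. exp (r * (\<gamma> * dyadic_osc (\<lambda>s. B (n + s) \<omega>) j)) \<partial>M) \<le> ennreal (exp L)"
    using nn_integral_exp_dyadic_osc_le[OF \<open>0 \<le> n\<close>, of "r * \<gamma>" j] \<open>1 \<le> r\<close> \<open>0 \<le> \<gamma>\<close>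
    by (simp add: L_def mult.assoc)
  from nn_integral_exp_le_of_scaled_exp[OF _ \<open>1 \<le> r\<close> this]
  have "(\<integral>\<^sup>+\<omega>. exp (\<beta> * dyadic_osc (\<lambda>s. B (n + s) \<omega>) j / chain_weight j) \<partial>M) \<le> ennreal (2 * exp (L / r))"
    by (simp add: \<gamma>_def)
  also have "\<dots> \<le> ennreal (512 * exp (8 * \<beta>\<^sup>2))"
  proof (rule ennreal_leI)
    have "L / r \<le> 8 * ln 2 + 8 * \<beta>\<^sup>2"
      unfolding L_def r_def \<gamma>_def by (rule chain_weight_exponent_le)
    then have "exp (L / r) \<le> exp (8 * ln 2) * exp (8 * \<beta>\<^sup>2)"
      by (simp add: exp_add[symmetric])
    also have "exp (8 * ln 2) = (256 :: real)"
      using exp_of_nat_mult[of 8 "ln (2 :: real)"] by simp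
    finally show "2 * exp (L / r) \<le> 512 * exp (8 * \<beta>\<^sup>2)"
      by simp
  qed
  finally show ?thesis .
qed

lemma nn_integral_chaining_bound_le:
  assumes "0 \<le> n" "0 \<le> \<beta>"
  shows "(\<integral>\<^sup>+\<omega>. chaining_bound \<beta> (\<lambda>s. B (n + s) \<omega>) \<partial>M) \<le> ennreal (1 + 512 * exp (8 * \<beta>\<^sup>2))"
proof -
  let ?w = chain_weight and ?C = "512 * exp (8 * \<beta>\<^sup>2)"
  have "(\<integral>\<^sup>+\<omega>. chaining_bound \<beta> (\<lambda>s. B (n + s) \<omega>) \<partial>M)
      = 1 + (\<Sum>j. ennreal (?w j) * (\<integral>\<^sup>+\<omega>. exp (\<beta> * dyadic_osc (\<lambda>s. B (n + s) \<omega>) j / ?w j) \<partial>M))"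
    unfolding chaining_bound_def using chain_weight_pos
    by (simp add: nn_integral_add nn_integral_suminf nn_integral_cmult emeasure_space_1
        ennreal_mult less_imp_le)
  also have "\<dots> \<le> 1 + (\<Sum>j. ennreal (?w j * ?C))"
  proof -
    have "ennreal (?w j) * (\<integral>\<^sup>+\<omega>. exp (\<beta> * dyadic_osc (\<lambda>s. B (n + s) \<omega>) j / ?w j) \<partial>M)
        \<le> ennreal (?w j * ?C)" for j
      using mult_left_mono[OF nn_integral_exp_weighted_dyadic_osc_le[OF assms, of j], of "ennreal (?w j)"]
        chain_weight_pos[of j] by (simp add: ennreal_mult)
    then show ?thesis
      by (intro add_left_mono suminf_le) auto
  qed
  also have "(\<Sum>j. ennreal (?w j * ?C)) = ennreal ?C"
    using sums_mult2[OF chain_weight_sums, of ?C] chain_weight_pos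
    by (subst suminf_ennreal2) (auto simp: sums_iff less_imp_le)
  finally show ?thesis
    by simp
qed

lemma BM_block_majorant_measurable [measurable]:
  "BM_block_majorant B \<sigma> \<kappa> n \<in> borel_measurable M"
  unfolding BM_block_majorant_def Let_def by measurable

lemma BM_majorant_measurable [measurable]: "BM_majorant B \<sigma> \<kappa> \<in> borel_measurable M"
  unfolding BM_majorant_def by measurable

lemma exp_drift_le_BM_block_majorant:
  assumes "0 < \<sigma>" "0 < \<kappa>" "\<omega> \<in> space M" and t: "real n \<le> t" "t \<le> real n + 1"
  shows "ennreal (exp (\<sigma> * B t \<omega> - (\<kappa> + \<sigma>\<^sup>2 / 2) * t)) \<le> BM_block_majorant B \<sigma> \<kappa> n \<omega>"
proof -
  define p where "p = 1 + \<kappa> / \<sigma>\<^sup>2"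
  define q where "q = 1 + \<sigma>\<^sup>2 / \<kappa>"
  have "0 < p" "0 < q"
    using assms(1,2) by (auto intro!: add_pos_pos simp: p_def q_def)
  have "1 / p + 1 / q = 1"
    using conjugate_exponents_ratio[of "\<sigma>\<^sup>2" \<kappa>] assms(1,2) by (simp add: p_def q_def)
  define a where "a = \<sigma> * B n \<omega> - (\<sigma>\<^sup>2 / 2 + 3 * \<kappa> / 4) * n"
  define d where "d = \<sigma> * \<bar>B t \<omega> - B n \<omega>\<bar> - \<kappa> / 4 * n"
  have "\<sigma> * (B t \<omega> - B n \<omega>) \<le> \<sigma> * \<bar>B t \<omega> - B n \<omega>\<bar>"
    using assms(1) by (simp add: mult_left_mono)
  moreover have "(\<kappa> + \<sigma>\<^sup>2 / 2) * n \<le> (\<kappa> + \<sigma>\<^sup>2 / 2) * t"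
    using assms(2) t by (intro mult_left_mono) auto
  ultimately have "\<sigma> * B t \<omega> - (\<kappa> + \<sigma>\<^sup>2 / 2) * t \<le> a + d"
    unfolding a_def d_def by (simp add: algebra_simps)
  then have "exp (\<sigma> * B t \<omega> - (\<kappa> + \<sigma>\<^sup>2 / 2) * t) \<le> exp (a + d)"
    by simp
  also have "\<dots> \<le> exp (p * a) + exp (q * d)"
    by (rule exp_add_le_conjugate[OF \<open>0 < p\<close> \<open>0 < q\<close> \<open>1 / p + 1 / q = 1\<close>])
  also have "exp (q * d) = exp (- q * \<kappa> / 4 * n) * exp (q * \<sigma> * \<bar>B t \<omega> - B n \<omega>\<bar>)"
    unfolding d_def by (simp add: algebra_simps exp_add[symmetric])
  finally have "ennreal (exp (\<sigma> * B t \<omega> - (\<kappa> + \<sigma>\<^sup>2 / 2) * t))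
      \<le> ennreal (exp (p * a)) + ennreal (exp (- q * \<kappa> / 4 * n)) * ennreal (exp (q * \<sigma> * \<bar>B t \<omega> - B n \<omega>\<bar>))"
    by (simp add: ennreal_mult[symmetric] ennreal_plus[symmetric] del: ennreal_plus)
  also have "\<dots> \<le> ennreal (exp (p * a)) + ennreal (exp (- q * \<kappa> / 4 * n)) * chaining_bound (q * \<sigma>) (\<lambda>s. B (real n + s) \<omega>)"
  proof -
    have "continuous_on {0..1} (\<lambda>s. B (real n + s) \<omega>)"
      using B_continuous[OF \<open>\<omega> \<in> space M\<close>]
      by (rule continuous_on_compose2) (auto intro!: continuous_intros)
    from exp_abs_diff_le_chaining_bound[OF this, of "q * \<sigma>" "t - real n"]
    have "ennreal (exp (q * \<sigma> * \<bar>B t \<omega> - B n \<omega>\<bar>)) \<le> chaining_bound (q * \<sigma>) (\<lambda>s. B (real n + s) \<omega>)"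
      using t \<open>0 < q\<close> assms(1) by simp
    then show ?thesis
      by (intro add_left_mono mult_left_mono) simp_all
  qed
  finally show ?thesis
    unfolding BM_block_majorant_def Let_def p_def[symmetric] q_def[symmetric]
    by (simp only: a_def)
qed

lemma BM_block_majorant_le_BM_majorant: "BM_block_majorant B \<sigma> \<kappa> n \<omega> \<le> BM_majorant B \<sigma> \<kappa> \<omega>"
proof -
  have "(\<Sum>m\<in>{n}. BM_block_majorant B \<sigma> \<kappa> m \<omega>) \<le> (\<Sum>m. BM_block_majorant B \<sigma> \<kappa> m \<omega>)"
    by (rule sum_le_suminf) auto
  then show ?thesis
    unfolding BM_majorant_def by simp
qed

lemma nn_integral_BM_block_majorant_le:
  assumes "0 < \<sigma>" "0 < \<kappa>"
  defines "p \<equiv> 1 + \<kappa> / \<sigma>\<^sup>2" and "q \<equiv> 1 + \<sigma>\<^sup>2 / \<kappa>"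
  shows "(\<integral>\<^sup>+\<omega>. BM_block_majorant B \<sigma> \<kappa> n \<omega> \<partial>M)
    \<le> ennreal (exp (- p * \<kappa> / 4 * n) + exp (- q * \<kappa> / 4 * n) * (1 + 512 * exp (8 * (q * \<sigma>)\<^sup>2)))"
proof -
  have "0 < q"
    using assms(1,2) by (auto intro!: add_pos_pos simp: q_def)
  have exponent: "- p * (\<sigma>\<^sup>2 / 2 + 3 * \<kappa> / 4) * n + (p * \<sigma>)\<^sup>2 * n / 2 = - p * \<kappa> / 4 * n"
  proof -
    have "(p * \<sigma>)\<^sup>2 = p * (p * \<sigma>\<^sup>2)"
      by algebra
    also have "p * \<sigma>\<^sup>2 = \<sigma>\<^sup>2 + \<kappa>"
      using assms(1) by (simp add: p_def field_simps)
    finally show ?thesis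
      by (simp add: field_simps)
  qed
  have "(\<integral>\<^sup>+\<omega>. exp (p * (\<sigma> * B n \<omega> - (\<sigma>\<^sup>2 / 2 + 3 * \<kappa> / 4) * n)) \<partial>M)
      = (\<integral>\<^sup>+\<omega>. ennreal (exp (- p * (\<sigma>\<^sup>2 / 2 + 3 * \<kappa> / 4) * n)) * exp (p * \<sigma> * (B n \<omega> - B 0 \<omega>)) \<partial>M)"
    by (intro nn_integral_cong) (simp add: B_zero ennreal_mult[symmetric] exp_add[symmetric] algebra_simps)
  also have "\<dots> = ennreal (exp (- p * (\<sigma>\<^sup>2 / 2 + 3 * \<kappa> / 4) * n)) * ennreal (exp ((p * \<sigma>)\<^sup>2 * n / 2))"
    using nn_integral_exp_increment[of 0 n "p * \<sigma>"] by (simp add: nn_integral_cmult)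
  also have "\<dots> = ennreal (exp (- p * (\<sigma>\<^sup>2 / 2 + 3 * \<kappa> / 4) * n + (p * \<sigma>)\<^sup>2 * n / 2))"
    by (subst exp_add) (simp add: ennreal_mult)
  also have "\<dots> = ennreal (exp (- p * \<kappa> / 4 * n))"
    unfolding exponent ..
  finally have first: "(\<integral>\<^sup>+\<omega>. exp (p * (\<sigma> * B n \<omega> - (\<sigma>\<^sup>2 / 2 + 3 * \<kappa> / 4) * n)) \<partial>M)
      = ennreal (exp (- p * \<kappa> / 4 * n))" .
  have "(\<integral>\<^sup>+\<omega>. BM_block_majorant B \<sigma> \<kappa> n \<omega> \<partial>M)
      = ennreal (exp (- p * \<kappa> / 4 * n))
        + ennreal (exp (- q * \<kappa> / 4 * n)) * (\<integral>\<^sup>+\<omega>. chaining_bound (q * \<sigma>) (\<lambda>s. B (n + s) \<omega>) \<partial>M)"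
    unfolding BM_block_majorant_def Let_def p_def[symmetric] q_def[symmetric] first[symmetric]
    by (simp add: nn_integral_add nn_integral_cmult)
  also have "\<dots> \<le> ennreal (exp (- p * \<kappa> / 4 * n))
      + ennreal (exp (- q * \<kappa> / 4 * n)) * ennreal (1 + 512 * exp (8 * (q * \<sigma>)\<^sup>2))"
    using \<open>0 < q\<close> assms(1)
    by (intro add_left_mono mult_left_mono nn_integral_chaining_bound_le) auto
  finally show ?thesis
    by (simp add: ennreal_mult)
qed

lemma nn_integral_BM_majorant_finite:
  assumes "0 < \<sigma>" "0 < \<kappa>"
  shows "(\<integral>\<^sup>+\<omega>. BM_majorant B \<sigma> \<kappa> \<omega> \<partial>M) < \<infinity>"
proof -
  define p where "p = 1 + \<kappa> / \<sigma>\<^sup>2"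
  define q where "q = 1 + \<sigma>\<^sup>2 / \<kappa>"
  define a where "a = p * \<kappa> / 4"
  define b where "b = q * \<kappa> / 4"
  define C where "C = 1 + 512 * exp (8 * (q * \<sigma>)\<^sup>2)"
  define f where "f n = exp (- a * real n) + exp (- b * real n) * C" for n
  have geometric: "summable (\<lambda>n. exp (- c * real n))" if "0 < c" for c :: real
    using summable_geometric[of "exp (- c)"] that by (simp add: exp_of_nat_mult[symmetric] mult.commute)
  have "0 < a" "0 < b"
    using assms by (auto intro!: add_pos_pos mult_pos_pos simp: a_def b_def p_def q_def)
  then have "summable f"
    unfolding f_def by (intro summable_add summable_mult2 geometric)
  have "(\<integral>\<^sup>+\<omega>. BM_majorant B \<sigma> \<kappa> \<omega> \<partial>M) = (\<Sum>n. \<integral>\<^sup>+\<omega>. BM_block_majorant B \<sigma> \<kappa> n \<omega> \<partial>M)"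
    unfolding BM_majorant_def by (simp add: nn_integral_suminf)
  also have "\<dots> \<le> (\<Sum>n. ennreal (f n))"
    using nn_integral_BM_block_majorant_le[OF assms, folded p_def q_def]
    by (intro suminf_le) (auto simp: f_def C_def a_def b_def)
  also have "\<dots> = ennreal (\<Sum>n. f n)"
    by (rule suminf_ennreal2[OF _ \<open>summable f\<close>]) (simp add: f_def C_def)
  also have "\<dots> < \<infinity>"
    by simp
  finally show ?thesis .
qed

end

section \<open>Expected rewards and the value function\<close>

lemma ennreal_integral_le_nn_integral:
  fixes f :: "'a \<Rightarrow> real"
  assumes "\<And>x. 0 \<le> f x"
  shows "ennreal (integral\<^sup>L M f) \<le> (\<integral>\<^sup>+x. f x \<partial>M)"
proof (cases "integrable M f")
  case True
  then show ?thesis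
    using assms by (simp add: nn_integral_eq_integral)
qed (simp add: not_integrable_integral_eq)

lemma integral_completion_pos:
  fixes f :: "'a \<Rightarrow> real"
  assumes "integrable (completion M) f" "\<And>x. 0 \<le> f x"
    and "A \<in> sets M" "emeasure M A \<noteq> 0" "\<And>x. x \<in> A \<Longrightarrow> 0 < f x"
  shows "0 < integral\<^sup>L (completion M) f"
proof -
  have "integral\<^sup>L (completion M) f \<noteq> 0"
  proof
    assume "integral\<^sup>L (completion M) f = 0"
    then have "AE x in M. f x = 0"
      using integral_nonneg_eq_0_iff_AE[OF assms(1)] assms(2) by (simp add: AE_completion_iff)
    then have "AE x in M. x \<notin> A"
      by eventually_elim (use assms(5) in force)
    then show False
      using assms(3,4) AE_iff_null_sets[OF assms(3)] by (auto dest: null_setsD1)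
  qed
  moreover have "0 \<le> integral\<^sup>L (completion M) f"
    using assms(2) by (rule Bochner_Integration.integral_nonneg)
  ultimately show ?thesis
    by simp
qed

lemma measurable_continuous_process:
  fixes X :: "real \<Rightarrow> 'a \<Rightarrow> real"
  assumes meas: "\<And>t. X t \<in> borel_measurable N"
    and cont: "\<And>\<omega>. \<omega> \<in> space N \<Longrightarrow> continuous_on {0..} (\<lambda>t. X t \<omega>)"
  shows "(\<lambda>x. X (max (snd x) 0) (fst x)) \<in> borel_measurable (N \<Otimes>\<^sub>M lborel)"
proof (rule borel_measurable_LIMSEQ_metric)
  fix k :: nat
  show "(\<lambda>x. X (dyadic_floor k (max (snd x) 0)) (fst x)) \<in> borel_measurable (N \<Otimes>\<^sub>M lborel)"
    unfolding dyadic_floor_def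
    by (rule measurable_compose_countable[where f="\<lambda>i x. X (of_int i / 2 ^ k) (fst x)"])
      (use meas in measurable)
next
  fix x :: "'a \<times> real"
  assume "x \<in> space (N \<Otimes>\<^sub>M lborel)"
  then have "continuous_on {0..} (\<lambda>t. X t (fst x))"
    by (intro cont) (auto simp: space_pair_measure)
  then show "(\<lambda>k. X (dyadic_floor k (max (snd x) 0)) (fst x)) \<longlonglongrightarrow> X (max (snd x) 0) (fst x)"
    by (rule continuous_on_tendsto_compose[OF _ dyadic_floor_tendsto])
      (auto intro!: always_eventually dyadic_floor_nonneg)
qed

lemma fhat_antimono:
  assumes "0 < \<rho> + \<mu>" "\<mu> \<le> \<mu>'" "0 \<le> \<rho>h + \<mu>h"
  shows "fhat \<rho> \<rho>h \<mu>h \<mu>' \<le> fhat \<rho> \<rho>h \<mu>h \<mu>"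
  unfolding fhat_def using assms by (intro divide_left_mono) auto

lemma GBM_at_1_greater:
  assumes "0 < \<sigma>" "0 < x" "(ln ((\<bar>K\<bar> + 1) / x) - (\<theta> - \<alpha> - \<sigma>\<^sup>2 / 2)) / \<sigma> < B 1 \<omega>"
  shows "K < GBM B \<theta> \<alpha> \<sigma> x 1 \<omega>"
proof -
  have "ln ((\<bar>K\<bar> + 1) / x) < (\<theta> - \<alpha> - \<sigma>\<^sup>2 / 2) + \<sigma> * B 1 \<omega>"
    using assms(1,3) by (simp add: divide_less_eq algebra_simps)
  moreover have "0 < (\<bar>K\<bar> + 1) / x"
    using assms(2) by simp
  ultimately have "(\<bar>K\<bar> + 1) / x < exp ((\<theta> - \<alpha> - \<sigma>\<^sup>2 / 2) * 1 + \<sigma> * B 1 \<omega>)"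
    by (metis exp_less_mono exp_ln mult_1_right)
  then have "\<bar>K\<bar> + 1 < GBM B \<theta> \<alpha> \<sigma> x 1 \<omega>"
    using assms(2) unfolding GBM_def by (simp add: divide_less_eq mult.commute)
  then show ?thesis
    by linarith
qed

context brownian_motion
begin

lemma B_measurable_completion [measurable]: "B t \<in> borel_measurable (completion M)"
  by (rule measurable_completion) simp

lemma B_jointly_measurable [measurable]:
  "(\<lambda>x. B (max (snd x) 0) (fst x)) \<in> borel_measurable (completion M \<Otimes>\<^sub>M lborel)"
  by (rule measurable_continuous_process) (auto intro: B_continuous)

lemma sets_aug_filt: "sets (aug_filt M B t) = sigma_sets (space M) (nat_filt M B t \<union> null_subsets M)"
proof -
  have "nat_filt M B t \<union> null_subsets M \<subseteq> Pow (space M)"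
    unfolding nat_filt_def null_subsets_def using sets.sets_into_space by (auto dest!: null_setsD2)
  then show ?thesis
    unfolding aug_filt_def by (simp add: sets_measure_of)
qed

lemma sets_aug_filt_subset_completion: "sets (aug_filt M B t) \<subseteq> sets (completion M)"
proof -
  have "nat_filt M B t \<union> null_subsets M \<subseteq> sets (completion M)"
    unfolding nat_filt_def null_subsets_def by (auto intro: null_sets_completion)
  from sets.sigma_sets_subset[OF this] show ?thesis
    unfolding sets_aug_filt by simp
qed

lemma BM_stopping_time_measurable:
  assumes "BM_stopping_time M B \<tau>"
  shows "\<tau> \<in> borel_measurable (completion M)"
proof (rule borel_measurableI_le)
  fix y :: ennreal
  show "{\<omega> \<in> space (completion M). \<tau> \<omega> \<le> y} \<in> sets (completion M)"
  proof (cases y)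
    case (real t)
    then have "{\<omega> \<in> space M. \<tau> \<omega> \<le> ennreal t} \<in> sets (aug_filt M B (max t 0))"
      using assms unfolding BM_stopping_time_def by (metis max.cobounded2 max_def ennreal_neg)
    then show ?thesis
      using sets_aug_filt_subset_completion real by auto
  qed simp
qed

context
  fixes \<theta> \<alpha> \<sigma> \<rho> \<nu> \<rho>h \<mu>h \<mu> :: real
begin

lemma reward_affine:
  "reward B \<theta> \<alpha> \<sigma> \<rho> \<nu> K \<rho>h \<mu>h x \<mu> \<tau> \<omega>
    = x * reward B \<theta> \<alpha> \<sigma> \<rho> \<nu> 0 \<rho>h \<mu>h 1 \<mu> \<tau> \<omega> + reward B \<theta> \<alpha> \<sigma> \<rho> \<nu> K \<rho>h \<mu>h 0 \<mu> \<tau> \<omega>"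
proof -
  let ?S = "{t. 0 \<le> t \<and> ennreal t < \<tau> \<omega>}"
  have "(LINT t:?S|lborel. exp (-(\<rho> + \<mu>) * t) * (\<alpha> + \<nu> * \<mu>) * GBM B \<theta> \<alpha> \<sigma> x t \<omega>)
      = (LINT t:?S|lborel. x * (exp (-(\<rho> + \<mu>) * t) * (\<alpha> + \<nu> * \<mu>) * GBM B \<theta> \<alpha> \<sigma> 1 t \<omega>))"
    by (simp add: GBM_def mult_ac)
  also have "\<dots> = x * (LINT t:?S|lborel. exp (-(\<rho> + \<mu>) * t) * (\<alpha> + \<nu> * \<mu>) * GBM B \<theta> \<alpha> \<sigma> 1 t \<omega>)"
    by (rule set_integral_mult_right)
  finally show ?thesis
    unfolding reward_def by (simp add: GBM_def set_lebesgue_integral_def algebra_simps)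
qed

lemma reward_measurable:
  assumes [measurable]: "\<tau> \<in> borel_measurable (completion M)"
  shows "reward B \<theta> \<alpha> \<sigma> \<rho> \<nu> K \<rho>h \<mu>h x \<mu> \<tau> \<in> borel_measurable (completion M)"
proof -
  define c where "c = \<theta> - \<alpha> - \<sigma>\<^sup>2 / 2"
  define F where "F \<omega> t = (if 0 \<le> t \<and> ennreal t < \<tau> \<omega>
      then exp (-(\<rho> + \<mu>) * t) * (\<alpha> + \<nu> * \<mu>) * (x * exp (c * t + \<sigma> * B (max t 0) \<omega>)) else 0)" for \<omega> t
  have B_at_\<tau>: "(\<lambda>\<omega>. B (enn2real (\<tau> \<omega>)) \<omega>) \<in> borel_measurable (completion M)"
    using measurable_compose[of "\<lambda>\<omega>. (\<omega>, enn2real (\<tau> \<omega>))" "completion M" "completion M \<Otimes>\<^sub>M lborel",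
        OF _ B_jointly_measurable] by (simp add: max_absorb1)
  have [measurable]: "(\<lambda>\<omega>. \<integral>t. F \<omega> t \<partial>lborel) \<in> borel_measurable (completion M)"
    unfolding F_def by measurable
  have "reward B \<theta> \<alpha> \<sigma> \<rho> \<nu> K \<rho>h \<mu>h x \<mu> \<tau> = (\<lambda>\<omega>. (\<integral>t. F \<omega> t \<partial>lborel)
      + (if \<tau> \<omega> = \<infinity> then 0 else exp (-(\<rho> + \<mu>) * enn2real (\<tau> \<omega>)) * fhat \<rho> \<rho>h \<mu>h \<mu>
           * (x * exp (c * enn2real (\<tau> \<omega>) + \<sigma> * B (enn2real (\<tau> \<omega>)) \<omega>) - K)))"
    unfolding reward_def set_lebesgue_integral_def GBM_def c_def F_def
    by (intro ext arg_cong2[where f="(+)"] Bochner_Integration.integral_cong)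
      (auto simp: indicator_def max_def)
  also have "\<dots> \<in> borel_measurable (completion M)"
    using B_at_\<tau> by measurable
  finally show ?thesis .
qed

lemma reward_nonneg:
  assumes "0 \<le> x" "K \<le> 0" "0 \<le> \<alpha> + \<nu> * \<mu>" "0 \<le> fhat \<rho> \<rho>h \<mu>h \<mu>"
  shows "0 \<le> reward B \<theta> \<alpha> \<sigma> \<rho> \<nu> K \<rho>h \<mu>h x \<mu> \<tau> \<omega>"
proof -
  have "0 \<le> GBM B \<theta> \<alpha> \<sigma> x t \<omega>" for t
    using assms(1) by (simp add: GBM_def)
  then have "0 \<le> GBM B \<theta> \<alpha> \<sigma> x t \<omega> - K" for t
    using assms(2) by (smt (verit))
  then show ?thesis
    unfolding reward_def set_lebesgue_integral_def using assms
    by (intro add_nonneg_nonneg Bochner_Integration.integral_nonneg) (auto simp: GBM_def indicator_def)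
qed

lemma abs_reward_at_zero_le:
  assumes "0 < \<rho> + \<mu>" "0 \<le> fhat \<rho> \<rho>h \<mu>h \<mu>"
  shows "\<bar>reward B \<theta> \<alpha> \<sigma> \<rho> \<nu> K \<rho>h \<mu>h 0 \<mu> \<tau> \<omega>\<bar> \<le> fhat \<rho> \<rho>h \<mu>h \<mu> * \<bar>K\<bar>"
proof (cases "\<tau> \<omega> = \<infinity>")
  case False
  let ?e = "exp (-(\<rho> + \<mu>) * enn2real (\<tau> \<omega>))"
  have "reward B \<theta> \<alpha> \<sigma> \<rho> \<nu> K \<rho>h \<mu>h 0 \<mu> \<tau> \<omega> = ?e * (fhat \<rho> \<rho>h \<mu>h \<mu> * (- K))"
    unfolding reward_def GBM_def set_lebesgue_integral_def using False by simp
  moreover have "-(\<rho> + \<mu>) * enn2real (\<tau> \<omega>) \<le> 0"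
    using assms(1) by (intro mult_nonpos_nonneg) auto
  then have "?e * (fhat \<rho> \<rho>h \<mu>h \<mu> * \<bar>K\<bar>) \<le> fhat \<rho> \<rho>h \<mu>h \<mu> * \<bar>K\<bar>"
    using assms(2) by (intro mult_left_le_one_le) auto
  ultimately show ?thesis
    using assms(2) by (simp add: abs_mult)
qed (use assms in \<open>simp add: reward_def GBM_def set_lebesgue_integral_def\<close>)

lemma discounted_GBM_le_BM_block_majorant:
  assumes "0 < \<sigma>" "0 < \<kappa>" and discount: "\<kappa> + \<theta> - \<alpha> \<le> \<rho> + \<mu>"
    and "\<omega> \<in> space M" "real n \<le> t" "t \<le> real n + 1"
  shows "ennreal (exp (-(\<rho> + \<mu>) * t) * GBM B \<theta> \<alpha> \<sigma> 1 t \<omega>) \<le> BM_block_majorant B \<sigma> \<kappa> n \<omega>"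
proof -
  have "(\<theta> - \<alpha> - \<sigma>\<^sup>2 / 2 - (\<rho> + \<mu>)) * t \<le> - (\<kappa> + \<sigma>\<^sup>2 / 2) * t"
    using discount \<open>real n \<le> t\<close> by (intro mult_right_mono) auto
  then have "exp (-(\<rho> + \<mu>) * t) * GBM B \<theta> \<alpha> \<sigma> 1 t \<omega> \<le> exp (\<sigma> * B t \<omega> - (\<kappa> + \<sigma>\<^sup>2 / 2) * t)"
    unfolding GBM_def by (simp add: exp_add[symmetric] algebra_simps)
  then show ?thesis
    using exp_drift_le_BM_block_majorant[OF assms(1,2,4-6)] ennreal_leI order_trans by blast
qed

lemma discounted_GBM_le_BM_majorant:
  assumes "0 < \<sigma>" "0 < \<kappa>" "\<kappa> + \<theta> - \<alpha> \<le> \<rho> + \<mu>" "\<omega> \<in> space M" "0 \<le> t"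
  shows "ennreal (exp (-(\<rho> + \<mu>) * t) * GBM B \<theta> \<alpha> \<sigma> 1 t \<omega>) \<le> BM_majorant B \<sigma> \<kappa> \<omega>"
proof -
  define n where "n = nat \<lfloor>t\<rfloor>"
  have "real n \<le> t" "t \<le> real n + 1"
    using assms(5) unfolding n_def by linarith+
  from discounted_GBM_le_BM_block_majorant[OF assms(1-4) this] show ?thesis
    using BM_block_majorant_le_BM_majorant order_trans by blast
qed

lemma nn_integral_discounted_GBM_le_BM_majorant:
  assumes "0 < \<sigma>" "0 < \<kappa>" "\<kappa> + \<theta> - \<alpha> \<le> \<rho> + \<mu>" "\<omega> \<in> space M" "0 \<le> c"
  shows "(\<integral>\<^sup>+t. indicator {0..} t * ennreal (c * exp (-(\<rho> + \<mu>) * t) * GBM B \<theta> \<alpha> \<sigma> 1 t \<omega>) \<partial>lborel)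
    \<le> ennreal c * BM_majorant B \<sigma> \<kappa> \<omega>"
proof -
  let ?G = "\<lambda>n. ennreal c * BM_block_majorant B \<sigma> \<kappa> n \<omega>"
  have "(\<integral>\<^sup>+t. indicator {0..} t * ennreal (c * exp (-(\<rho> + \<mu>) * t) * GBM B \<theta> \<alpha> \<sigma> 1 t \<omega>) \<partial>lborel)
      \<le> (\<integral>\<^sup>+t. (\<Sum>n. ?G n * indicator {real n..<real n + 1} t) \<partial>lborel)"
  proof (intro nn_integral_mono)
    fix t :: real
    show "indicator {0..} t * ennreal (c * exp (-(\<rho> + \<mu>) * t) * GBM B \<theta> \<alpha> \<sigma> 1 t \<omega>)
        \<le> (\<Sum>n. ?G n * indicator {real n..<real n + 1} t)"
    proof (cases "0 \<le> t")
      case True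
      define n where "n = nat \<lfloor>t\<rfloor>"
      have t: "real n \<le> t" "t < real n + 1"
        using True unfolding n_def by linarith+
      have "ennreal (c * exp (-(\<rho> + \<mu>) * t) * GBM B \<theta> \<alpha> \<sigma> 1 t \<omega>)
          = ennreal c * ennreal (exp (-(\<rho> + \<mu>) * t) * GBM B \<theta> \<alpha> \<sigma> 1 t \<omega>)"
        using \<open>0 \<le> c\<close> by (simp add: GBM_def ennreal_mult mult.assoc)
      also have "\<dots> \<le> ?G n"
        using discounted_GBM_le_BM_block_majorant[OF assms(1-4)] t by (simp add: mult_left_mono)
      also have "\<dots> = (\<Sum>m\<in>{n}. ?G m * indicator {real m..<real m + 1} t)"
        using t by simp
      also have "\<dots> \<le> (\<Sum>m. ?G m * indicator {real m..<real m + 1} t)"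
        by (rule sum_le_suminf) auto
      finally show ?thesis
        using True by simp
    qed simp
  qed
  also have "\<dots> = (\<Sum>n. ?G n)"
    by (simp add: nn_integral_suminf nn_integral_cmult_indicator)
  finally show ?thesis
    unfolding BM_majorant_def by simp
qed

lemma reward_slope_le_BM_majorant:
  assumes "0 < \<sigma>" "0 < \<kappa>" "\<kappa> + \<theta> - \<alpha> \<le> \<rho> + \<mu>" "\<omega> \<in> space M"
    and a: "0 \<le> \<alpha> + \<nu> * \<mu>" and f: "0 \<le> fhat \<rho> \<rho>h \<mu>h \<mu>"
  shows "ennreal (reward B \<theta> \<alpha> \<sigma> \<rho> \<nu> 0 \<rho>h \<mu>h 1 \<mu> \<tau> \<omega>)
    \<le> ennreal (\<alpha> + \<nu> * \<mu> + fhat \<rho> \<rho>h \<mu>h \<mu>) * BM_majorant B \<sigma> \<kappa> \<omega>"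
proof -
  let ?a = "\<alpha> + \<nu> * \<mu>" and ?f = "fhat \<rho> \<rho>h \<mu>h \<mu>"
  let ?D = "\<lambda>t. exp (-(\<rho> + \<mu>) * t) * GBM B \<theta> \<alpha> \<sigma> 1 t \<omega>"
  let ?S = "{t. 0 \<le> t \<and> ennreal t < \<tau> \<omega>}"
  define I where "I = (LINT t:?S|lborel. exp (-(\<rho> + \<mu>) * t) * ?a * GBM B \<theta> \<alpha> \<sigma> 1 t \<omega>)"
  define T where "T = (if \<tau> \<omega> = \<infinity> then 0 else ?f * ?D (enn2real (\<tau> \<omega>)))"
  have "0 \<le> I"
    unfolding I_def set_lebesgue_integral_def GBM_def using a
    by (intro Bochner_Integration.integral_nonneg) (simp add: indicator_def)
  have "0 \<le> T"
    unfolding T_def GBM_def using f by simp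
  have "ennreal I \<le> (\<integral>\<^sup>+t. indicator ?S t * ennreal (exp (-(\<rho> + \<mu>) * t) * ?a * GBM B \<theta> \<alpha> \<sigma> 1 t \<omega>) \<partial>lborel)"
    unfolding I_def set_lebesgue_integral_def using a
    by (intro order_trans[OF ennreal_integral_le_nn_integral] nn_integral_mono)
      (auto simp: GBM_def split: split_indicator)
  also have "\<dots> \<le> (\<integral>\<^sup>+t. indicator {0..} t * ennreal (?a * exp (-(\<rho> + \<mu>) * t) * GBM B \<theta> \<alpha> \<sigma> 1 t \<omega>) \<partial>lborel)"
    by (intro nn_integral_mono) (auto simp: mult_ac split: split_indicator)
  also have "\<dots> \<le> ennreal ?a * BM_majorant B \<sigma> \<kappa> \<omega>"
    by (rule nn_integral_discounted_GBM_le_BM_majorant[OF assms(1-4) a])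
  finally have I: "ennreal I \<le> ennreal ?a * BM_majorant B \<sigma> \<kappa> \<omega>" .
  have T: "ennreal T \<le> ennreal ?f * BM_majorant B \<sigma> \<kappa> \<omega>"
  proof (cases "\<tau> \<omega> = \<infinity>")
    case False
    have "ennreal (?D (enn2real (\<tau> \<omega>))) \<le> BM_majorant B \<sigma> \<kappa> \<omega>"
      by (rule discounted_GBM_le_BM_majorant[OF assms(1-4)]) simp
    then show ?thesis
      unfolding T_def using False f by (simp add: ennreal_mult' mult_left_mono)
  qed (simp add: T_def)
  have "reward B \<theta> \<alpha> \<sigma> \<rho> \<nu> 0 \<rho>h \<mu>h 1 \<mu> \<tau> \<omega> = I + T"
    unfolding reward_def I_def T_def by simp
  then have "ennreal (reward B \<theta> \<alpha> \<sigma> \<rho> \<nu> 0 \<rho>h \<mu>h 1 \<mu> \<tau> \<omega>) = ennreal I + ennreal T"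
    using \<open>0 \<le> I\<close> \<open>0 \<le> T\<close> by simp
  also have "\<dots> \<le> ennreal ?a * BM_majorant B \<sigma> \<kappa> \<omega> + ennreal ?f * BM_majorant B \<sigma> \<kappa> \<omega>"
    using I T by (rule add_mono)
  finally show ?thesis
    using a f by (simp add: ennreal_plus distrib_right)
qed

lemma integrable_reward_slope:
  assumes "0 < \<sigma>" "0 < \<kappa>" "\<kappa> + \<theta> - \<alpha> \<le> \<rho> + \<mu>" and \<tau>: "\<tau> \<in> borel_measurable (completion M)"
    and a: "0 \<le> \<alpha> + \<nu> * \<mu>" and f: "0 \<le> fhat \<rho> \<rho>h \<mu>h \<mu>"
  shows "integrable (completion M) (reward B \<theta> \<alpha> \<sigma> \<rho> \<nu> 0 \<rho>h \<mu>h 1 \<mu> \<tau>)"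
    and "integral\<^sup>L (completion M) (reward B \<theta> \<alpha> \<sigma> \<rho> \<nu> 0 \<rho>h \<mu>h 1 \<mu> \<tau>)
      \<le> (\<alpha> + \<nu> * \<mu> + fhat \<rho> \<rho>h \<mu>h \<mu>) * enn2real (\<integral>\<^sup>+\<omega>. BM_majorant B \<sigma> \<kappa> \<omega> \<partial>M)"
proof -
  let ?R = "reward B \<theta> \<alpha> \<sigma> \<rho> \<nu> 0 \<rho>h \<mu>h 1 \<mu> \<tau>"
  let ?k = "\<alpha> + \<nu> * \<mu> + fhat \<rho> \<rho>h \<mu>h \<mu>"
  have R_measurable: "?R \<in> borel_measurable (completion M)"
    by (rule reward_measurable[OF \<tau>])
  have R_nonneg: "0 \<le> ?R \<omega>" for \<omega>
    using a f by (intro reward_nonneg) auto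
  have "(\<integral>\<^sup>+\<omega>. ?R \<omega> \<partial>completion M) \<le> (\<integral>\<^sup>+\<omega>. ennreal ?k * BM_majorant B \<sigma> \<kappa> \<omega> \<partial>completion M)"
    using reward_slope_le_BM_majorant[OF assms(1-3) _ a f] by (intro nn_integral_mono) simp
  also have "\<dots> = ennreal ?k * (\<integral>\<^sup>+\<omega>. BM_majorant B \<sigma> \<kappa> \<omega> \<partial>M)"
    by (simp add: nn_integral_cmult nn_integral_completion measurable_completion)
  finally have le: "(\<integral>\<^sup>+\<omega>. ?R \<omega> \<partial>completion M) \<le> ennreal ?k * (\<integral>\<^sup>+\<omega>. BM_majorant B \<sigma> \<kappa> \<omega> \<partial>M)" .
  have finite: "ennreal ?k * (\<integral>\<^sup>+\<omega>. BM_majorant B \<sigma> \<kappa> \<omega> \<partial>M) < \<infinity>"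
    using nn_integral_BM_majorant_finite[OF assms(1,2)] by (simp add: ennreal_mult_less_top)
  show "integrable (completion M) ?R"
    using le finite R_measurable R_nonneg by (intro integrableI_nonneg) auto
  have "integral\<^sup>L (completion M) ?R = enn2real (\<integral>\<^sup>+\<omega>. ?R \<omega> \<partial>completion M)"
    using R_measurable R_nonneg by (intro integral_eq_nn_integral) auto
  also have "\<dots> \<le> enn2real (ennreal ?k * (\<integral>\<^sup>+\<omega>. BM_majorant B \<sigma> \<kappa> \<omega> \<partial>M))"
    using le finite by (intro enn2real_mono) auto
  also have "\<dots> = ?k * enn2real (\<integral>\<^sup>+\<omega>. BM_majorant B \<sigma> \<kappa> \<omega> \<partial>M)"
    using add_nonneg_nonneg[OF a f] by (simp only: enn2real_mult enn2real_ennreal)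
  finally show "integral\<^sup>L (completion M) ?R \<le> ?k * enn2real (\<integral>\<^sup>+\<omega>. BM_majorant B \<sigma> \<kappa> \<omega> \<partial>M)" .
qed

lemma integrable_reward_at_zero:
  assumes \<tau>: "\<tau> \<in> borel_measurable (completion M)" and "0 < \<rho> + \<mu>" "0 \<le> fhat \<rho> \<rho>h \<mu>h \<mu>"
  shows "integrable (completion M) (reward B \<theta> \<alpha> \<sigma> \<rho> \<nu> K \<rho>h \<mu>h 0 \<mu> \<tau>)"
    and "integral\<^sup>L (completion M) (reward B \<theta> \<alpha> \<sigma> \<rho> \<nu> K \<rho>h \<mu>h 0 \<mu> \<tau>) \<le> fhat \<rho> \<rho>h \<mu>h \<mu> * \<bar>K\<bar>"
proof -
  interpret completion: prob_space "completion M"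
    by (rule prob_space_completion)
  have bound: "\<bar>reward B \<theta> \<alpha> \<sigma> \<rho> \<nu> K \<rho>h \<mu>h 0 \<mu> \<tau> \<omega>\<bar> \<le> fhat \<rho> \<rho>h \<mu>h \<mu> * \<bar>K\<bar>" for \<omega>
    using abs_reward_at_zero_le[OF assms(2,3)] .
  show int: "integrable (completion M) (reward B \<theta> \<alpha> \<sigma> \<rho> \<nu> K \<rho>h \<mu>h 0 \<mu> \<tau>)"
    using bound reward_measurable[OF \<tau>] by (intro completion.integrable_const_bound) auto
  show "integral\<^sup>L (completion M) (reward B \<theta> \<alpha> \<sigma> \<rho> \<nu> K \<rho>h \<mu>h 0 \<mu> \<tau>) \<le> fhat \<rho> \<rho>h \<mu>h \<mu> * \<bar>K\<bar>"
    using bound by (intro completion.integral_le_const[OF int]) (auto intro: abs_le_D1)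
qed

lemma integrable_reward:
  assumes "0 < \<sigma>" "0 < \<kappa>" "\<kappa> + \<theta> - \<alpha> \<le> \<rho> + \<mu>" "0 < \<rho> + \<mu>"
    and \<tau>: "\<tau> \<in> borel_measurable (completion M)"
    and "0 \<le> \<alpha> + \<nu> * \<mu>" "0 \<le> fhat \<rho> \<rho>h \<mu>h \<mu>"
  shows "integrable (completion M) (reward B \<theta> \<alpha> \<sigma> \<rho> \<nu> K \<rho>h \<mu>h x \<mu> \<tau>)"
  unfolding reward_affine[where K=K and x=x and \<tau>=\<tau>, abs_def]
  using integrable_reward_slope(1)[OF assms(1-3) \<tau> assms(6,7)] integrable_reward_at_zero(1)[OF \<tau> assms(4,7)]
  by simp

lemma integral_reward_affine:
  assumes "0 < \<sigma>" "0 < \<kappa>" "\<kappa> + \<theta> - \<alpha> \<le> \<rho> + \<mu>" "0 < \<rho> + \<mu>"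
    and \<tau>: "\<tau> \<in> borel_measurable (completion M)"
    and "0 \<le> \<alpha> + \<nu> * \<mu>" "0 \<le> fhat \<rho> \<rho>h \<mu>h \<mu>"
  shows "integral\<^sup>L (completion M) (reward B \<theta> \<alpha> \<sigma> \<rho> \<nu> K \<rho>h \<mu>h x \<mu> \<tau>)
    = integral\<^sup>L (completion M) (reward B \<theta> \<alpha> \<sigma> \<rho> \<nu> 0 \<rho>h \<mu>h 1 \<mu> \<tau>) * x
      + integral\<^sup>L (completion M) (reward B \<theta> \<alpha> \<sigma> \<rho> \<nu> K \<rho>h \<mu>h 0 \<mu> \<tau>)"
  unfolding reward_affine[where K=K and x=x and \<tau>=\<tau>, abs_def]
  using integrable_reward_slope(1)[OF assms(1-3) \<tau> assms(6,7)] integrable_reward_at_zero(1)[OF \<tau> assms(4,7)]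
  by (simp add: mult.commute)

lemma stopping_time_B1_greater: "BM_stopping_time M B (\<lambda>\<omega>. if z < B 1 \<omega> then 1 else \<infinity>)"
  unfolding BM_stopping_time_def
proof (intro allI impI)
  fix t :: real
  assume "0 \<le> t"
  show "{\<omega> \<in> space M. (if z < B 1 \<omega> then 1 else \<infinity>) \<le> ennreal t} \<in> sets (aug_filt M B t)"
  proof (cases "1 \<le> t")
    case True
    then have "{\<omega> \<in> space M. (if z < B 1 \<omega> then 1 else \<infinity>) \<le> ennreal t} = B 1 -` {z<..} \<inter> space M"
      by (auto simp: top_unique)
    also have "\<dots> \<in> nat_filt M B t"
      unfolding nat_filt_def using True by (intro UN_I[of 1]) (auto intro!: exI[of _ "{z<..}"])
    finally show ?thesis
      unfolding sets_aug_filt by (rule sigma_sets.Basic[OF UnI1])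
  next
    case False
    then have "{\<omega> \<in> space M. (if z < B 1 \<omega> then 1 else \<infinity>) \<le> ennreal t} = {}"
      using \<open>0 \<le> t\<close> by (auto simp: top_unique)
    then show ?thesis
      by (metis sets.empty_sets)
  qed
qed

text \<open>Stop at time 1 exactly when X_1 > |K| + 1: this has positive probability, and the
  reward is nonnegative on the complementary event.\<close>
lemma ex_stopping_time_integral_reward_pos:
  assumes "0 < \<sigma>" "0 < \<kappa>" "\<kappa> + \<theta> - \<alpha> \<le> \<rho> + \<mu>" "0 < \<rho> + \<mu>"
    and a: "0 \<le> \<alpha> + \<nu> * \<mu>" and f: "0 < fhat \<rho> \<rho>h \<mu>h \<mu>" and "0 < x"
  shows "\<exists>\<tau>. BM_stopping_time M B \<tau> \<and> 0 < integral\<^sup>L (completion M) (reward B \<theta> \<alpha> \<sigma> \<rho> \<nu> K \<rho>h \<mu>h x \<mu> \<tau>)"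
proof (intro exI conjI)
  define z where "z = (ln ((\<bar>K\<bar> + 1) / x) - (\<theta> - \<alpha> - \<sigma>\<^sup>2 / 2)) / \<sigma>"
  define \<tau> :: "'a \<Rightarrow> ennreal" where "\<tau> \<omega> = (if z < B 1 \<omega> then 1 else \<infinity>)" for \<omega>
  show "BM_stopping_time M B \<tau>"
    unfolding \<tau>_def by (rule stopping_time_B1_greater)
  let ?r = "reward B \<theta> \<alpha> \<sigma> \<rho> \<nu> K \<rho>h \<mu>h x \<mu> \<tau>"
  have running_nonneg: "0 \<le> (LINT t:{t. 0 \<le> t \<and> ennreal t < \<tau> \<omega>}|lborel.
      exp (-(\<rho> + \<mu>) * t) * (\<alpha> + \<nu> * \<mu>) * GBM B \<theta> \<alpha> \<sigma> x t \<omega>)" for \<omega>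
    unfolding set_lebesgue_integral_def GBM_def using a \<open>0 < x\<close>
    by (intro Bochner_Integration.integral_nonneg) (simp add: indicator_def)
  have "0 \<le> ?r \<omega>" and "z < B 1 \<omega> \<Longrightarrow> 0 < ?r \<omega>" for \<omega>
    using running_nonneg[of \<omega>] GBM_at_1_greater[OF \<open>0 < \<sigma>\<close> \<open>0 < x\<close>, of K \<theta> \<alpha> B \<omega>, folded z_def] f
    unfolding reward_def \<tau>_def by (auto simp: less_imp_le add_nonneg_pos)
  moreover have "integrable (completion M) ?r"
    using assms(1-4) a f BM_stopping_time_measurable[OF \<open>BM_stopping_time M B \<tau>\<close>]
    by (intro integrable_reward) auto
  ultimately show "0 < integral\<^sup>L (completion M) ?r"
    using emeasure_B1_greater_pos[of z]
    by (intro integral_completion_pos[where A="{\<omega> \<in> space M. z < B 1 \<omega>}"]) auto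
qed

lemma VN_eq_SUP_affine:
  assumes "0 < \<sigma>" "0 < \<kappa>" "\<kappa> + \<theta> - \<alpha> \<le> \<rho> + \<mu>" "0 < \<rho> + \<mu>"
    and "0 \<le> \<alpha> + \<nu> * \<mu>" "0 \<le> fhat \<rho> \<rho>h \<mu>h \<mu>"
  shows "VN M B \<theta> \<alpha> \<sigma> \<rho> \<nu> K \<rho>h \<mu>h x \<mu> = (SUP \<tau>\<in>{\<tau>. BM_stopping_time M B \<tau>}.
      integral\<^sup>L (completion M) (reward B \<theta> \<alpha> \<sigma> \<rho> \<nu> 0 \<rho>h \<mu>h 1 \<mu> \<tau>) * x
      + integral\<^sup>L (completion M) (reward B \<theta> \<alpha> \<sigma> \<rho> \<nu> K \<rho>h \<mu>h 0 \<mu> \<tau>))"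
  unfolding VN_def
  by (intro SUP_cong refl integral_reward_affine[OF assms(1-4) _ assms(5,6)] BM_stopping_time_measurable) auto

lemma VN_pos_mono_convex_lipschitz:
  assumes "0 < \<sigma>" "0 < \<kappa>" "\<kappa> + \<theta> - \<alpha> \<le> \<rho> + \<mu>" "0 < \<rho> + \<mu>"
    and a: "0 \<le> \<alpha> + \<nu> * \<mu>" and f: "0 < fhat \<rho> \<rho>h \<mu>h \<mu>"
    and L: "(\<alpha> + \<nu> * \<mu> + fhat \<rho> \<rho>h \<mu>h \<mu>) * enn2real (\<integral>\<^sup>+\<omega>. BM_majorant B \<sigma> \<kappa> \<omega> \<partial>M) \<le> L"
  shows "(\<forall>x>0. 0 < VN M B \<theta> \<alpha> \<sigma> \<rho> \<nu> K \<rho>h \<mu>h x \<mu>)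
      \<and> mono_on {0<..} (\<lambda>x. VN M B \<theta> \<alpha> \<sigma> \<rho> \<nu> K \<rho>h \<mu>h x \<mu>)
      \<and> convex_on {0<..} (\<lambda>x. VN M B \<theta> \<alpha> \<sigma> \<rho> \<nu> K \<rho>h \<mu>h x \<mu>)
      \<and> (\<forall>x y. \<bar>VN M B \<theta> \<alpha> \<sigma> \<rho> \<nu> K \<rho>h \<mu>h x \<mu> - VN M B \<theta> \<alpha> \<sigma> \<rho> \<nu> K \<rho>h \<mu>h y \<mu>\<bar> \<le> L * \<bar>x - y\<bar>)"
proof -
  let ?T = "{\<tau>. BM_stopping_time M B \<tau>}"
  define slope where "slope \<tau> = integral\<^sup>L (completion M) (reward B \<theta> \<alpha> \<sigma> \<rho> \<nu> 0 \<rho>h \<mu>h 1 \<mu> \<tau>)" for \<tau>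
  define intercept where "intercept \<tau> = integral\<^sup>L (completion M) (reward B \<theta> \<alpha> \<sigma> \<rho> \<nu> K \<rho>h \<mu>h 0 \<mu> \<tau>)" for \<tau>
  have VN: "VN M B \<theta> \<alpha> \<sigma> \<rho> \<nu> K \<rho>h \<mu>h x \<mu> = (SUP \<tau>\<in>?T. slope \<tau> * x + intercept \<tau>)" for x
    unfolding slope_def intercept_def using assms(1-4) a f by (intro VN_eq_SUP_affine) auto
  have nonempty: "?T \<noteq> {}"
    using stopping_time_B1_greater by blast
  have slopes: "0 \<le> slope \<tau> \<and> slope \<tau> \<le> L" if "\<tau> \<in> ?T" for \<tau>
    unfolding slope_def
    using order_trans[OF integrable_reward_slope(2)[OF assms(1-3) BM_stopping_time_measurable a less_imp_le[OF f]] L] a f that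
    by (auto intro!: Bochner_Integration.integral_nonneg reward_nonneg)
  have intercepts: "intercept \<tau> \<le> fhat \<rho> \<rho>h \<mu>h \<mu> * \<bar>K\<bar>" if "\<tau> \<in> ?T" for \<tau>
    unfolding intercept_def
    using integrable_reward_at_zero(2)[OF BM_stopping_time_measurable assms(4)] f that by auto
  have "0 < VN M B \<theta> \<alpha> \<sigma> \<rho> \<nu> K \<rho>h \<mu>h x \<mu>" if "0 < x" for x
  proof -
    obtain \<tau> where "\<tau> \<in> ?T" and "0 < integral\<^sup>L (completion M) (reward B \<theta> \<alpha> \<sigma> \<rho> \<nu> K \<rho>h \<mu>h x \<mu> \<tau>)"
      using ex_stopping_time_integral_reward_pos[OF assms(1-4) a f \<open>0 < x\<close>] by blast
    moreover have "integral\<^sup>L (completion M) (reward B \<theta> \<alpha> \<sigma> \<rho> \<nu> K \<rho>h \<mu>h x \<mu> \<tau>) = slope \<tau> * x + intercept \<tau>"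
      unfolding slope_def intercept_def using assms(1-4) a f BM_stopping_time_measurable \<open>\<tau> \<in> ?T\<close>
      by (intro integral_reward_affine) auto
    moreover have "slope \<tau> * x + intercept \<tau> \<le> (SUP \<tau>\<in>?T. slope \<tau> * x + intercept \<tau>)"
      by (rule cSUP_upper[OF \<open>\<tau> \<in> ?T\<close> bdd_above_affine_family[OF nonempty slopes intercepts]])
    ultimately show ?thesis
      unfolding VN by linarith
  qed
  moreover have "mono_on {0<..} (\<lambda>x. VN M B \<theta> \<alpha> \<sigma> \<rho> \<nu> K \<rho>h \<mu>h x \<mu>)"
    unfolding VN by (rule mono_imp_mono_on[OF mono_SUP_affine[OF nonempty slopes intercepts]])
  moreover have "convex_on {0<..} (\<lambda>x. VN M B \<theta> \<alpha> \<sigma> \<rho> \<nu> K \<rho>h \<mu>h x \<mu>)"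
    unfolding VN using convex_on_SUP_affine[OF nonempty slopes intercepts]
    by (rule convex_on_subset) (auto intro: convex_real_interval)
  moreover have "\<bar>VN M B \<theta> \<alpha> \<sigma> \<rho> \<nu> K \<rho>h \<mu>h x \<mu> - VN M B \<theta> \<alpha> \<sigma> \<rho> \<nu> K \<rho>h \<mu>h y \<mu>\<bar> \<le> L * \<bar>x - y\<bar>" for x y
    unfolding VN by (rule abs_SUP_affine_diff_le[OF nonempty slopes intercepts])
  ultimately show ?thesis
    by auto
qed

end

end

theorem proposition4p3:
  fixes M :: "'a measure" and B :: "real \<Rightarrow> 'a \<Rightarrow> real"
    and \<theta> \<alpha> \<sigma> \<rho> \<nu> K \<rho>h \<mu>m \<mu>M \<mu>h :: real
  assumes "std_BM M B"
    and "\<theta> > 0" and "\<alpha> \<ge> 0" and "\<sigma> > 0" and "\<rho> > 0" and "0 \<le> \<nu>" and "\<nu> \<le> 1"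
    and "\<rho>h > 0" and "0 < \<mu>m" and "\<mu>m \<le> \<mu>M" and "\<mu>m \<le> \<mu>h" and "\<mu>h \<le> \<mu>M"
    and "\<theta> - \<alpha> - \<rho> - \<mu>m < 0"
  shows "(\<forall>\<mu>\<in>{\<mu>m..\<mu>M}.
            (\<forall>x>0. VN M B \<theta> \<alpha> \<sigma> \<rho> \<nu> K \<rho>h \<mu>h x \<mu> > 0)
          \<and> mono_on {0<..} (\<lambda>x. VN M B \<theta> \<alpha> \<sigma> \<rho> \<nu> K \<rho>h \<mu>h x \<mu>)
          \<and> convex_on {0<..} (\<lambda>x. VN M B \<theta> \<alpha> \<sigma> \<rho> \<nu> K \<rho>h \<mu>h x \<mu>))
       \<and> (\<exists>L>0. \<forall>\<mu>\<in>{\<mu>m..\<mu>M}. \<forall>x>0. \<forall>y>0.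
            \<bar>VN M B \<theta> \<alpha> \<sigma> \<rho> \<nu> K \<rho>h \<mu>h x \<mu> - VN M B \<theta> \<alpha> \<sigma> \<rho> \<nu> K \<rho>h \<mu>h y \<mu>\<bar> \<le> L * \<bar>x - y\<bar>)"
proof -
  interpret brownian_motion M B
    by unfold_locales fact
  define \<kappa> where "\<kappa> = \<rho> + \<mu>m - (\<theta> - \<alpha>)"
  define L where "L = (\<alpha> + \<mu>M + fhat \<rho> \<rho>h \<mu>h \<mu>m) * enn2real (\<integral>\<^sup>+\<omega>. BM_majorant B \<sigma> \<kappa> \<omega> \<partial>M) + 1"
  have "0 < L"
    unfolding L_def using assms by (auto intro!: add_nonneg_pos mult_nonneg_nonneg simp: fhat_def)
  have "(\<forall>x>0. 0 < VN M B \<theta> \<alpha> \<sigma> \<rho> \<nu> K \<rho>h \<mu>h x \<mu>)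
      \<and> mono_on {0<..} (\<lambda>x. VN M B \<theta> \<alpha> \<sigma> \<rho> \<nu> K \<rho>h \<mu>h x \<mu>)
      \<and> convex_on {0<..} (\<lambda>x. VN M B \<theta> \<alpha> \<sigma> \<rho> \<nu> K \<rho>h \<mu>h x \<mu>)
      \<and> (\<forall>x y. \<bar>VN M B \<theta> \<alpha> \<sigma> \<rho> \<nu> K \<rho>h \<mu>h x \<mu> - VN M B \<theta> \<alpha> \<sigma> \<rho> \<nu> K \<rho>h \<mu>h y \<mu>\<bar> \<le> L * \<bar>x - y\<bar>)"
    if "\<mu> \<in> {\<mu>m..\<mu>M}" for \<mu>
  proof (rule VN_pos_mono_convex_lipschitz)
    have "\<nu> * \<mu> \<le> \<mu>"
      using that assms by (intro mult_left_le_one_le) auto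
    moreover have "fhat \<rho> \<rho>h \<mu>h \<mu> \<le> fhat \<rho> \<rho>h \<mu>h \<mu>m"
      using that assms by (intro fhat_antimono) auto
    ultimately have "\<alpha> + \<nu> * \<mu> + fhat \<rho> \<rho>h \<mu>h \<mu> \<le> \<alpha> + \<mu>M + fhat \<rho> \<rho>h \<mu>h \<mu>m"
      using that by simp
    from mult_right_mono[OF this enn2real_nonneg[of "\<integral>\<^sup>+\<omega>. BM_majorant B \<sigma> \<kappa> \<omega> \<partial>M"]]
    show "(\<alpha> + \<nu> * \<mu> + fhat \<rho> \<rho>h \<mu>h \<mu>) * enn2real (\<integral>\<^sup>+\<omega>. BM_majorant B \<sigma> \<kappa> \<omega> \<partial>M) \<le> L"
      unfolding L_def by linarith
  qed (use that assms in \<open>auto simp: \<kappa>_def fhat_def\<close>)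
  then show ?thesis
    using \<open>0 < L\<close> by (auto intro!: exI[of _ L])
qed

end
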